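(* Let $N\ge2$, let $(p(n))_{n=1,\dots,N-1}\subseteq[1,\infty)$, let $L\ge2$, $m>0$, and assume that for all $1\le n\le N-1$, $$\inf_{\mathbf x_0\in\mathbb Z^{nd}}\mathbb P\big(\Lambda_L^{(n)}(\mathbf x_0)\text{ is } m\text{-localizing for } H^{(n)}\big)\ge1-L^{-p(n)}.$$ If $\Lambda_L^{(N)}(\mathbf x)$ is partially interactive, then $$\mathbb P\big(\Lambda_L^{(N)}(\mathbf x)\text{ is } m\text{-localizing for } H^{(N)}\big)\ge1-L^{-\widetilde p(N)},\qquad \widetilde p(N):=\min_{1\le n\le N-1}p(n)-\frac{\log 2}{\log L}.$$
   Context: Fix $\tau\in(0,1)$ (a fixed parameter of the paper). Let $d\ge1$. For $n\ge1$, points of $\mathbb Z^{nd}$ are $\mathbf x=(x_1,\dots,x_n)$, $x_j\in\mathbb Z^d$; $d_S(\mathbf x,\mathbf y)=\min_{\pi\in S_n}\|\mathbf x-\pi\mathbf y\|_\infty$ with $\pi\mathbf y=(y_{\pi(1)},\dots,y_{\pi(n)})$; $\Lambda_L^{(n)}(\mathbf a)=\{\mathbf x\in\mathbb Z^{nd}:d_S(\mathbf x,\mathbf a)\le L\}$. Random potential: $\mathcal V=\{\mathcal V(u)\}_{u\in\mathbb Z^d}$ i.i.d. with density $\rho$ supported in $[0,v_{\max}]$, bounded above and below by positive constants on $[0,v_{\max}]$, continuously differentiable on $(0,v_{\max})$ with bounded derivative. Interaction $\mathcal U:\mathbb Z^d\to\mathbb R$ finitely supported, $\lambda>0$. $H^{(n)}=-\Delta^{(n)}+\lambda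 V+U$ on $\ell^2(\mathbb Z^{nd})$, $(\Delta^{(n)}\varphi)(\mathbf x)=\sum_{\|\mathbf y-\mathbf x\|_1=1}\varphi(\mathbf y)$, $V(\mathbf x)=\sum_{j=1}^n\mathcal V(x_j)$, $U(\mathbf x)=\sum_{1\le i<j\le n}\mathcal U(x_i-x_j)$ (same $\mathcal V,\mathcal U,\lambda$ for all $n$); $H_\Theta=1_\Theta H1_\Theta$ on $\ell^2(\Theta)$. Localizing: for a cube $\Lambda_L$, $\varphi\in\ell^2(\Lambda_L)$ is $(\mathbf x,m)$-localizing if $\|\varphi\|_2=1$ and $|\varphi(\mathbf y)|\le e^{-md_S(\mathbf y,\mathbf x)}$ for all $\mathbf y\in\Lambda_L$ with $d_S(\mathbf y,\mathbf x)\ge L^\tau$; $m$-localizing if this holds for some $\mathbf x\in\Lambda_L$; $\Lambda_L$ is $m$-localizing for $H$ if $H_{\Lambda_L}$ has an orthonormal eigenbasis (with multiplicity) of $m$-localizing functions. Partially interactive: with $C_{\mathcal U}=\max_{u\in\operatorname{supp}\mathcal U}\|u\|+1$, a cube $\Lambda_L^{(N)}(\mathbf x)$ is partially interactive if there exist $1\le N_1,N_2<N$ with $N_1+N_2=N$ and disjoint $\mathcal S_1,\mathcal S_2\subseteq\mathbb Z^d$ with $\operatorname{dist}(\mathcal S_1,\mathcal S_2)\ge C_{\mathcal U}$ such that every $\mathbf y\in\Lambda_L^{(N)}(\mathbf x)$ has $\#\{j:y_j\in\mathcal S_1\}=N_1$ and $\#\{j:y_j\in\mathcal S_2\}=N_2$.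 *)

theory Defs
  imports "HOL-Probability.Probability" "HOL-Combinatorics.Permutations"
begin

(* Sites of Z^d are  int ^ 'd  (d = CARD('d) >= 1, arbitrary finite index type).
   An n-particle configuration x = (x_1,...,x_n) in Z^{nd} is a list of sites of length n. *)
type_synonym 'd site = "int ^ 'd"
type_synonym 'd config = "'d site list"

definition site_norm :: "'d::finite site \<Rightarrow> int" where
  "site_norm u = Max (range (\<lambda>i. \<bar>u $ i\<bar>))"

definition linf_dist :: "'d::finite config \<Rightarrow> 'd config \<Rightarrow> int" where
  "linf_dist x y = Max (insert 0 {site_norm (x ! j - y ! j) | j. j < length x})"

definition l1_dist :: "'d::finite config \<Rightarrow> 'd config \<Rightarrow> int" where
  "l1_dist x y = (\<Sum>j<length x. \<Sum>i\<in>UNIV. \<bar>(x ! j) $ i - (y ! j) $ i\<bar>)"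

definition dS :: "'d::finite config \<Rightarrow> 'd config \<Rightarrow> int" where
  "dS x y = Min {linf_dist x (permute_list \<pi> y) | \<pi>. \<pi> permutes {..<length y}}"

definition cube :: "nat \<Rightarrow> real \<Rightarrow> 'd::finite config \<Rightarrow> 'd config set" where
  "cube n L a = {x. length x = n \<and> real_of_int (dS x a) \<le> L}"

definition pot :: "('d::finite site \<Rightarrow> real) \<Rightarrow> 'd config \<Rightarrow> real" where
  "pot V x = (\<Sum>j<length x. V (x ! j))"

definition inter :: "('d::finite site \<Rightarrow> real) \<Rightarrow> 'd config \<Rightarrow> real" where
  "inter U x = (\<Sum>j<length x. \<Sum>i<j. U (x ! i - x ! j))"

(* (H_Theta phi)(x) with H = -Delta + lam V + U and H_Theta = 1_Theta H 1_Theta,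
   phi a function on configurations (only its values on Theta matter) *)
definition ham_restr ::
  "real \<Rightarrow> ('d::finite site \<Rightarrow> real) \<Rightarrow> ('d site \<Rightarrow> real) \<Rightarrow> 'd config set
    \<Rightarrow> ('d config \<Rightarrow> complex) \<Rightarrow> 'd config \<Rightarrow> complex" where
  "ham_restr lam V U \<Theta> \<phi> x =
     (if x \<in> \<Theta> then
        - (\<Sum>y\<in>{y\<in>\<Theta>. length y = length x \<and> l1_dist y x = 1}. \<phi> y)
        + complex_of_real (lam * pot V x + inter U x) * \<phi> x
      else 0)"

definition localizing_at ::
  "real \<Rightarrow> real \<Rightarrow> real \<Rightarrow> 'd::finite config set \<Rightarrow> ('d config \<Rightarrow> complex) \<Rightarrow> 'd config \<Rightarrow> bool" where
  "localizing_at \<tau> L m \<Lambda> \<phi> x \<longleftrightarrow>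
     sqrt (\<Sum>y\<in>\<Lambda>. (cmod (\<phi> y))\<^sup>2) = 1 \<and>
     (\<forall>y\<in>\<Lambda>. real_of_int (dS y x) \<ge> L powr \<tau> \<longrightarrow> cmod (\<phi> y) \<le> exp (- m * real_of_int (dS y x)))"

definition m_localizing_fun ::
  "real \<Rightarrow> real \<Rightarrow> real \<Rightarrow> 'd::finite config set \<Rightarrow> ('d config \<Rightarrow> complex) \<Rightarrow> bool" where
  "m_localizing_fun \<tau> L m \<Lambda> \<phi> \<longleftrightarrow> (\<exists>x\<in>\<Lambda>. localizing_at \<tau> L m \<Lambda> \<phi> x)"

definition m_localizing_cube ::
  "real \<Rightarrow> real \<Rightarrow> real \<Rightarrow> ('d::finite site \<Rightarrow> real) \<Rightarrow> ('d site \<Rightarrow> real)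
    \<Rightarrow> nat \<Rightarrow> real \<Rightarrow> 'd config \<Rightarrow> bool" where
  "m_localizing_cube \<tau> m lam V U n L a \<longleftrightarrow>
     (let \<Lambda> = cube n L a in
      \<exists>B :: ('d config \<Rightarrow> complex) set.
        card B = card \<Lambda> \<and>
        (\<forall>\<phi>\<in>B. \<forall>\<psi>\<in>B. (\<Sum>y\<in>\<Lambda>. \<phi> y * cnj (\<psi> y)) = (if \<phi> = \<psi> then 1 else 0)) \<and>
        (\<forall>\<phi>\<in>B. (\<forall>y. y \<notin> \<Lambda> \<longrightarrow> \<phi> y = 0) \<and>
                 (\<exists>E. \<forall>y\<in>\<Lambda>. ham_restr lam V U \<Lambda> \<phi> y = E * \<phi> y) \<and>
                 m_localizing_fun \<tau> L m \<Lambda> \<phi>))"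

definition C_U :: "('d::finite site \<Rightarrow> real) \<Rightarrow> int" where
  "C_U U = Max (insert 0 (site_norm ` {u. U u \<noteq> 0})) + 1"

definition partially_interactive ::
  "('d::finite site \<Rightarrow> real) \<Rightarrow> nat \<Rightarrow> real \<Rightarrow> 'd config \<Rightarrow> bool" where
  "partially_interactive U N L x \<longleftrightarrow>
     (\<exists>N1 N2 (S1 :: 'd site set) S2.
        1 \<le> N1 \<and> N1 < N \<and> 1 \<le> N2 \<and> N2 < N \<and> N1 + N2 = N \<and>
        S1 \<inter> S2 = {} \<and> (\<forall>a\<in>S1. \<forall>b\<in>S2. C_U U \<le> site_norm (a - b)) \<and>
        (\<forall>y\<in>cube N L x. card {j. j < N \<and> y ! j \<in> S1} = N1 \<and>
                          card {j. j < N \<and> y ! j \<in> S2} = N2))"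

end

theory Submission
  imports Defs
begin

(* Let S1 and S2 witness that the cube Lambda = Lambda_L^(N)(x) is partially interactive.  Every
   configuration of Lambda has N1 particles in S1 and N2 in S2; recording the set J of slots occupied
   by S1 particles and interleaving along J identifies the configurations with a given J with
   Lambda1 x Lambda2, the cubes around the S1 part x1 and the S2 part x2 of x.  A hopping step moves
   a single particle, so it cannot change J, and the interaction between S1 and S2 vanishes as they
   are C_U apart; hence H_Lambda acts on every copy as H_Lambda1 (x) 1 + 1 (x) H_Lambda2.  Products of
   localizing eigenbases of Lambda1 and Lambda2, over all J, thus form a localizing eigenbasis of
   Lambda, the d_S distance to an interleaved centre being at most the larger of the two factor
   distances.  The event for Lambda therefore contains the intersection of the events for Lambda1 and
   Lambda2, whose probabilities are at least 1 - L^(-p(N1)) and 1 - L^(-p(N2)), and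
   1 - 2 L^(-min p) = 1 - L^(-tilde p(N)).  The events are measurable because the potentials admitting a
   localizing eigenbasis form a closed set. *)

section \<open>Splitting and interleaving lists along an index set\<close>

definition enum_idx :: "nat set \<Rightarrow> nat \<Rightarrow> nat" where
  "enum_idx J k = sorted_list_of_set J ! k"

definition rank_idx :: "nat set \<Rightarrow> nat \<Rightarrow> nat" where
  "rank_idx J = inv_into {..<card J} (enum_idx J)"

lemma bij_betw_enum_idx: "finite J \<Longrightarrow> bij_betw (enum_idx J) {..<card J} J"
  unfolding enum_idx_def
  by (rule bij_betw_nth) (auto simp: sorted_list_of_set.length_sorted_key_list_of_set)

lemma enum_idx_strict_mono: "finite J \<Longrightarrow> k < l \<Longrightarrow> l < card J \<Longrightarrow> enum_idx J k < enum_idx J l"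
  unfolding enum_idx_def
  by (rule sorted_wrt_nth_less) (auto simp: sorted_list_of_set.length_sorted_key_list_of_set)

lemma enum_idx_less_iff:
  "finite J \<Longrightarrow> k < card J \<Longrightarrow> l < card J \<Longrightarrow> enum_idx J k < enum_idx J l \<longleftrightarrow> k < l"
  by (metis enum_idx_strict_mono linorder_neqE_nat not_less_iff_gr_or_eq)

lemma enum_idx_in: "finite J \<Longrightarrow> k < card J \<Longrightarrow> enum_idx J k \<in> J"
  using bij_betw_enum_idx bij_betwE by blast

lemma rank_idx_enum_idx: "finite J \<Longrightarrow> k < card J \<Longrightarrow> rank_idx J (enum_idx J k) = k"
  unfolding rank_idx_def using bij_betw_enum_idx[of J] by (simp add: bij_betw_def inv_into_f_f)

lemma enum_idx_rank_idx: "finite J \<Longrightarrow> j \<in> J \<Longrightarrow> enum_idx J (rank_idx J j) = j"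
  unfolding rank_idx_def using bij_betw_enum_idx[of J] by (simp add: bij_betw_def f_inv_into_f)

lemma rank_idx_less: "finite J \<Longrightarrow> j \<in> J \<Longrightarrow> rank_idx J j < card J"
  unfolding rank_idx_def using bij_betw_enum_idx[of J]
  by (metis bij_betwE bij_betw_inv_into lessThan_iff)

lemma bij_betw_rank_idx: "finite J \<Longrightarrow> bij_betw (rank_idx J) J {..<card J}"
  unfolding rank_idx_def by (rule bij_betw_inv_into[OF bij_betw_enum_idx])

lemma bij_betw_through_enum_idx:
  assumes "finite J" "finite K" "bij_betw g {..<card J} {..<card K}"
  shows "bij_betw (enum_idx K \<circ> g \<circ> rank_idx J) J K"
  using bij_betw_trans[OF bij_betw_trans[OF bij_betw_rank_idx[OF assms(1)] assms(3)]
                          bij_betw_enum_idx[OF assms(2)]]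
  by (simp add: comp_assoc)

lemma sum_enum_idx: "finite J \<Longrightarrow> (\<Sum>j\<in>J. g j) = (\<Sum>k<card J. g (enum_idx J k))"
  using sum.reindex_bij_betw[OF bij_betw_enum_idx[of J], of g] by simp

definition sublist_on :: "nat set \<Rightarrow> 'a list \<Rightarrow> 'a list" where
  "sublist_on J y = map (\<lambda>k. y ! enum_idx J k) [0..<card J]"

definition interleave :: "nat \<Rightarrow> nat set \<Rightarrow> 'a list \<Rightarrow> 'a list \<Rightarrow> 'a list" where
  "interleave N J a b =
     map (\<lambda>j. if j \<in> J then a ! rank_idx J j else b ! rank_idx ({..<N} - J) j) [0..<N]"

lemma length_sublist_on [simp]: "length (sublist_on J y) = card J"
  by (simp add: sublist_on_def)

lemma nth_sublist_on [simp]: "k < card J \<Longrightarrow> sublist_on J y ! k = y ! enum_idx J k"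
  by (simp add: sublist_on_def)

lemma length_interleave [simp]: "length (interleave N J a b) = N"
  by (simp add: interleave_def)

lemma nth_interleave:
  "j < N \<Longrightarrow> interleave N J a b ! j = (if j \<in> J then a ! rank_idx J j else b ! rank_idx ({..<N} - J) j)"
  by (simp add: interleave_def)

lemma nth_interleave_enum_idx:
  assumes "J \<subseteq> {..<N}"
  shows "k < card J \<Longrightarrow> interleave N J a b ! enum_idx J k = a ! k"
    and "k < card ({..<N} - J) \<Longrightarrow> interleave N J a b ! enum_idx ({..<N} - J) k = b ! k"
proof -
  have fin: "finite J" using assms finite_subset by blast
  show "k < card J \<Longrightarrow> interleave N J a b ! enum_idx J k = a ! k"
  proof -
    assume k: "k < card J"
    then have "enum_idx J k \<in> J" by (rule enum_idx_in[OF fin])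
    then show ?thesis using assms k by (auto simp: nth_interleave rank_idx_enum_idx[OF fin])
  qed
  show "k < card ({..<N} - J) \<Longrightarrow> interleave N J a b ! enum_idx ({..<N} - J) k = b ! k"
    using enum_idx_in[of "{..<N} - J" k] by (auto simp: nth_interleave rank_idx_enum_idx)
qed

lemma sublist_on_interleave:
  assumes "J \<subseteq> {..<N}"
  shows "length a = card J \<Longrightarrow> sublist_on J (interleave N J a b) = a"
    and "length b = card ({..<N} - J) \<Longrightarrow> sublist_on ({..<N} - J) (interleave N J a b) = b"
  by (auto intro!: nth_equalityI simp: nth_interleave_enum_idx[OF assms])

lemma interleave_sublist_on:
  assumes J: "J \<subseteq> {..<N}" and y: "length y = N"
  shows "interleave N J (sublist_on J y) (sublist_on ({..<N} - J) y) = y"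
proof (rule nth_equalityI)
  fix j assume "j < length (interleave N J (sublist_on J y) (sublist_on ({..<N} - J) y))"
  then have j: "j < N" by simp
  have fin: "finite J" "finite ({..<N} - J)" using J finite_subset by auto
  show "interleave N J (sublist_on J y) (sublist_on ({..<N} - J) y) ! j = y ! j"
  proof (cases "j \<in> J")
    case True
    then show ?thesis using j fin by (simp add: nth_interleave rank_idx_less enum_idx_rank_idx)
  next
    case False
    then have "j \<in> {..<N} - J" using j by simp
    then show ?thesis using j False fin
      by (simp add: nth_interleave rank_idx_less enum_idx_rank_idx del: Diff_iff)
  qed
qed (simp add: y)

lemma sum_interleave:
  assumes J: "J \<subseteq> {..<N}" and "length a = card J" "length c = card J"
    and "length b = card ({..<N} - J)" "length d = card ({..<N} - J)"
  shows "(\<Sum>j<N. h (interleave N J a b ! j) (interleave N J c d ! j)) =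
           (\<Sum>k<length a. h (a ! k) (c ! k)) + (\<Sum>k<length b. h (b ! k) (d ! k))"
proof -
  have fin: "finite J" "finite ({..<N} - J)" using J finite_subset by auto
  have "(\<Sum>j<N. h (interleave N J a b ! j) (interleave N J c d ! j)) =
        (\<Sum>j\<in>J. h (interleave N J a b ! j) (interleave N J c d ! j)) +
        (\<Sum>j\<in>{..<N} - J. h (interleave N J a b ! j) (interleave N J c d ! j))"
    using sum.subset_diff[OF J finite_lessThan] by (simp add: add.commute)
  also have "\<dots> = (\<Sum>k<card J. h (a ! k) (c ! k)) + (\<Sum>k<card ({..<N} - J). h (b ! k) (d ! k))"
    by (simp only: sum_enum_idx[OF fin(1)] sum_enum_idx[OF fin(2)])
      (simp add: nth_interleave_enum_idx[OF J])
  finally show ?thesis using assms by simp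
qed

section \<open>Distances, potential and interaction of configurations\<close>

lemma site_norm_ge_abs: "\<bar>u $ i\<bar> \<le> site_norm u"
  unfolding site_norm_def by (rule Max_ge) auto

lemma site_norm_zero [simp]: "site_norm 0 = 0"
  by (simp add: site_norm_def)

lemma site_norm_commute: "site_norm (a - b) = site_norm (b - a)"
proof -
  have "range (\<lambda>i. \<bar>(a - b) $ i\<bar>) = range (\<lambda>i. \<bar>(b - a) $ i\<bar>)"
    by (simp add: abs_minus_commute)
  then show ?thesis by (simp add: site_norm_def)
qed

lemma finite_site_ball: "finite {u :: 'd::finite site. site_norm (u - c) \<le> R}"
proof -
  have "{u :: 'd site. site_norm (u - c) \<le> R} \<subseteq> vec_lambda ` (PiE UNIV (\<lambda>i. {c$i - R .. c$i + R}))"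
  proof
    fix u :: "'d site" assume u: "u \<in> {u. site_norm (u - c) \<le> R}"
    have "\<bar>u$i - c$i\<bar> \<le> R" for i using site_norm_ge_abs[of "u - c" i] u by simp
    then have "c$i - R \<le> u$i \<and> u$i \<le> c$i + R" for i by (smt (verit))
    then have "vec_nth u \<in> PiE UNIV (\<lambda>i. {c$i - R .. c$i + R})" by auto
    then show "u \<in> vec_lambda ` (PiE UNIV (\<lambda>i. {c$i - R .. c$i + R}))"
      by (intro image_eqI[of _ _ "vec_nth u"]) (auto simp: vec_nth_inverse)
  qed
  then show ?thesis by (rule finite_subset) (intro finite_imageI finite_PiE; simp)
qed

lemma interaction_vanishes_far:
  assumes "finite {u. U u \<noteq> 0}" and "C_U U \<le> site_norm u"
  shows "U u = 0"
proof (rule ccontr)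
  assume "U u \<noteq> 0"
  then have "site_norm u \<le> Max (insert 0 (site_norm ` {u. U u \<noteq> 0}))"
    using assms(1) by (intro Max_ge) auto
  then show False using assms(2) by (simp add: C_U_def)
qed

lemma linf_dist_le_iff:
  assumes "length y = n"
  shows "linf_dist y z \<le> r \<longleftrightarrow> 0 \<le> r \<and> (\<forall>j<n. site_norm (y!j - z!j) \<le> r)"
proof -
  have "{site_norm (y ! j - z ! j) |j. j < length y} = (\<lambda>j. site_norm (y ! j - z ! j)) ` {..<n}"
    using assms by auto
  then show ?thesis unfolding linf_dist_def by (auto simp: assms)
qed

lemma dS_le_iff:
  assumes "length y = n" "length z = n"
  shows "dS y z \<le> r \<longleftrightarrow>
           0 \<le> r \<and> (\<exists>f. bij_betw f {..<n} {..<n} \<and> (\<forall>j<n. site_norm (y!j - z!(f j)) \<le> r))"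
proof -
  have eq: "{linf_dist y (permute_list \<pi> z) | \<pi>. \<pi> permutes {..<length z}} =
            (\<lambda>\<pi>. linf_dist y (permute_list \<pi> z)) ` {\<pi>. \<pi> permutes {..<n}}"
    using assms by auto
  have "{\<pi>. \<pi> permutes {..<n}} \<noteq> {}" using permutes_id by blast
  then have "dS y z \<le> r \<longleftrightarrow> (\<exists>\<pi>. \<pi> permutes {..<n} \<and> linf_dist y (permute_list \<pi> z) \<le> r)"
    unfolding dS_def eq by (auto simp: Min_le_iff finite_permutations)
  also have "\<dots> \<longleftrightarrow> 0 \<le> r \<and> (\<exists>f. bij_betw f {..<n} {..<n} \<and> (\<forall>j<n. site_norm (y!j - z!(f j)) \<le> r))"
  proof
    assume "\<exists>\<pi>. \<pi> permutes {..<n} \<and> linf_dist y (permute_list \<pi> z) \<le> r"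
    then obtain \<pi> where "\<pi> permutes {..<n}" "linf_dist y (permute_list \<pi> z) \<le> r" by blast
    then show "0 \<le> r \<and> (\<exists>f. bij_betw f {..<n} {..<n} \<and> (\<forall>j<n. site_norm (y!j - z!(f j)) \<le> r))"
      using assms by (auto simp: linf_dist_le_iff permute_list_nth intro!: exI[of _ \<pi>] permutes_imp_bij)
  next
    assume "0 \<le> r \<and> (\<exists>f. bij_betw f {..<n} {..<n} \<and> (\<forall>j<n. site_norm (y!j - z!(f j)) \<le> r))"
    then obtain f where f: "0 \<le> r" "bij_betw f {..<n} {..<n}" "\<forall>j<n. site_norm (y!j - z!(f j)) \<le> r"
      by blast
    define \<pi> where "\<pi> j = (if j < n then f j else j)" for j
    have "bij_betw \<pi> {..<n} {..<n}"
      using f(2) by (rule bij_betw_cong[THEN iffD1, rotated]) (simp add: \<pi>_def)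
    then have \<pi>: "\<pi> permutes {..<n}" by (rule bij_imp_permutes) (simp add: \<pi>_def)
    moreover have "linf_dist y (permute_list \<pi> z) \<le> r"
      using f assms \<pi> by (auto simp: linf_dist_le_iff permute_list_nth \<pi>_def)
    ultimately show "\<exists>\<pi>. \<pi> permutes {..<n} \<and> linf_dist y (permute_list \<pi> z) \<le> r" by blast
  qed
  finally show ?thesis .
qed

lemma mem_cube_iff: "y \<in> cube n L a \<longleftrightarrow> length y = n \<and> dS y a \<le> \<lfloor>L\<rfloor>"
  by (auto simp: cube_def le_floor_iff)

lemma center_in_cube: "0 \<le> L \<Longrightarrow> a \<in> cube (length a) L a"
  using dS_le_iff[of a "length a" a "\<lfloor>L\<rfloor>"] by (auto simp: mem_cube_iff intro!: exI[of _ id])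

lemma finite_cube:
  fixes a :: "'d::finite config"
  assumes "length a = n"
  shows "finite (cube n L a)"
proof -
  define A where "A = (\<Union>i<n. {u :: 'd site. site_norm (u - a!i) \<le> \<lfloor>L\<rfloor>})"
  have "cube n L a \<subseteq> {xs. set xs \<subseteq> A \<and> length xs = n}"
  proof
    fix y assume "y \<in> cube n L a"
    then have y: "length y = n" "dS y a \<le> \<lfloor>L\<rfloor>" by (auto simp: mem_cube_iff)
    then obtain f where "bij_betw f {..<n} {..<n}" "\<forall>j<n. site_norm (y!j - a!(f j)) \<le> \<lfloor>L\<rfloor>"
      using dS_le_iff[OF y(1) assms] by auto
    then have "y ! j \<in> A" if "j < n" for j
      using that unfolding A_def by (auto dest: bij_betwE intro!: bexI[of _ "f j"])
    then show "y \<in> {xs. set xs \<subseteq> A \<and> length xs = n}" using y by (auto simp: in_set_conv_nth)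
  qed
  moreover have "finite A" unfolding A_def using finite_site_ball by auto
  ultimately show ?thesis using finite_lists_length_eq finite_subset by blast
qed

lemma l1_dist_nonneg: "0 \<le> l1_dist y z"
  unfolding l1_dist_def by (intro sum_nonneg) auto

lemma site_l1_ge_1: "(u::'d::finite site) \<noteq> v \<Longrightarrow> 1 \<le> (\<Sum>i\<in>UNIV. \<bar>u $ i - v $ i\<bar>)"
proof -
  assume "u \<noteq> v"
  then obtain i where i: "u $ i \<noteq> v $ i" by (metis vec_eq_iff)
  have "1 \<le> \<bar>u $ i - v $ i\<bar>" using i by linarith
  also have "\<dots> \<le> (\<Sum>i\<in>UNIV. \<bar>u $ i - v $ i\<bar>)" by (rule member_le_sum) auto
  finally show ?thesis .
qed

lemma l1_dist_eq_0_iff: "length y = length z \<Longrightarrow> l1_dist y z = 0 \<longleftrightarrow> y = z"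
proof
  assume len: "length y = length z" and "l1_dist y z = 0"
  then have "\<forall>j\<in>{..<length y}. (\<Sum>i\<in>UNIV. \<bar>(y!j) $ i - (z!j) $ i\<bar>) = 0"
    unfolding l1_dist_def by (subst sum_nonneg_eq_0_iff[symmetric]) auto
  then have "y ! j = z ! j" if "j < length y" for j
    using that site_l1_ge_1[of "y ! j" "z ! j"] by fastforce
  then show "y = z" using len by (auto intro: nth_equalityI)
qed (simp add: l1_dist_def)

lemma l1_dist_ge_2:
  assumes "length y = length z" "j1 < length y" "j2 < length y" "j1 \<noteq> j2"
    and "y!j1 \<noteq> z!j1" "y!j2 \<noteq> z!j2"
  shows "2 \<le> l1_dist y z"
proof -
  let ?t = "\<lambda>j. (\<Sum>i\<in>UNIV. \<bar>(y!j) $ i - (z!j) $ i\<bar>)"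
  have "?t j1 + ?t j2 = sum ?t {j1, j2}" using assms by simp
  also have "\<dots> \<le> sum ?t {..<length y}" by (rule sum_mono2) (use assms in auto)
  finally show ?thesis using site_l1_ge_1[OF assms(5)] site_l1_ge_1[OF assms(6)] by (simp add: l1_dist_def)
qed

lemma dS_interleave_le:
  assumes J: "J \<subseteq> {..<N}" and K: "K \<subseteq> {..<N}" and JK: "card J = card K"
    and a: "length a = card J" "length c = card J"
    and b: "length b = card ({..<N} - J)" "length d = card ({..<N} - J)"
    and "dS a c \<le> r" "dS b d \<le> r"
  shows "dS (interleave N J a b) (interleave N K c d) \<le> r"
proof -
  define Jc Kc where "Jc = {..<N} - J" and "Kc = {..<N} - K"
  have fin: "finite J" "finite K" "finite Jc" "finite Kc"
    using J K finite_subset by (auto simp: Jc_def Kc_def)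
  have JKc: "card Jc = card Kc" using J K JK by (simp add: Jc_def Kc_def card_Diff_subset fin)
  obtain f1 where f1: "bij_betw f1 {..<card J} {..<card J}" "\<forall>k<card J. site_norm (a!k - c!(f1 k)) \<le> r"
    and "0 \<le> r"
    using assms dS_le_iff[of a "card J" c r] by auto
  obtain f2 where f2: "bij_betw f2 {..<card Jc} {..<card Jc}" "\<forall>k<card Jc. site_norm (b!k - d!(f2 k)) \<le> r"
    using assms dS_le_iff[of b "card Jc" d r] by (auto simp: Jc_def)
  \<comment> \<open>Transported along the enumerations, the two matchings combine to one of the interleavings.\<close>
  define F1 F2 where "F1 = enum_idx K \<circ> f1 \<circ> rank_idx J" and "F2 = enum_idx Kc \<circ> f2 \<circ> rank_idx Jc"
  define f where "f j = (if j \<in> J then F1 j else F2 j)" for j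
  have "bij_betw f1 {..<card J} {..<card K}" "bij_betw f2 {..<card Jc} {..<card Kc}"
    using f1(1) f2(1) JK JKc by simp_all
  then have "bij_betw F1 J K" "bij_betw F2 Jc Kc"
    unfolding F1_def F2_def by (simp_all add: bij_betw_through_enum_idx fin)
  moreover have "f j = F1 j" if "j \<in> J" for j using that by (simp add: f_def)
  moreover have "f j = F2 j" if "j \<in> Jc" for j using that by (simp add: f_def Jc_def)
  ultimately have "bij_betw f J K" "bij_betw f Jc Kc" by (simp_all cong: bij_betw_cong)
  then have "bij_betw f (J \<union> Jc) (K \<union> Kc)"
    by (rule bij_betw_combine) (auto simp: Kc_def)
  then have f: "bij_betw f {..<N} {..<N}"
    using J K by (simp add: Jc_def Kc_def Un_absorb1 Un_Diff_cancel)
  have "site_norm (interleave N J a b ! j - interleave N K c d ! f j) \<le> r" if "j < N" for j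
  proof (cases "j \<in> J")
    case True
    have "f1 (rank_idx J j) < card K" using f1(1) rank_idx_less[OF fin(1) True] JK by (auto dest: bij_betwE)
    then show ?thesis
      using True that f1(2) rank_idx_less[OF fin(1) True]
      by (simp add: nth_interleave f_def F1_def nth_interleave_enum_idx[OF K])
  next
    case False
    then have j: "j \<in> Jc" using that by (simp add: Jc_def)
    have "f2 (rank_idx Jc j) < card Kc" using f2(1) rank_idx_less[OF fin(3) j] JKc by (auto dest: bij_betwE)
    then show ?thesis
      using False that f2(2) rank_idx_less[OF fin(3) j]
      by (simp add: nth_interleave f_def F2_def Jc_def Kc_def nth_interleave_enum_idx[OF K])
  qed
  then show ?thesis by (subst dS_le_iff[of _ N]) (use f \<open>0 \<le> r\<close> in auto)
qed

lemma dS_sublist_on_le: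
  assumes "length y = N" "length z = N" and f: "bij_betw f {..<N} {..<N}"
    and "\<forall>j<N. site_norm (y!j - z!(f j)) \<le> r" "0 \<le> r"
    and A: "A \<subseteq> {..<N}" and "f ` A = B"
  shows "dS (sublist_on A y) (sublist_on B z) \<le> r"
proof -
  have B: "B \<subseteq> {..<N}" using assms bij_betwE by blast
  have fin: "finite A" "finite B" using A B finite_subset by auto
  have fA: "bij_betw f A B" using bij_betw_subset[OF f A] assms by simp
  then have AB: "card A = card B" by (rule bij_betw_same_card)
  define g where "g = rank_idx B \<circ> f \<circ> enum_idx A"
  have g: "bij_betw g {..<card A} {..<card A}"
    using bij_betw_trans[OF bij_betw_trans[OF bij_betw_enum_idx[OF fin(1)] fA] bij_betw_rank_idx[OF fin(2)]]
    by (simp add: g_def comp_assoc AB)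
  have bound: "site_norm (sublist_on A y ! k - sublist_on B z ! g k) \<le> r" if "k < card A" for k
  proof -
    have "f (enum_idx A k) \<in> B" using enum_idx_in[OF fin(1) that] fA bij_betwE by blast
    then have "sublist_on B z ! g k = z ! f (enum_idx A k)"
      using rank_idx_less[OF fin(2)] by (simp add: g_def enum_idx_rank_idx[OF fin(2)])
    moreover have "enum_idx A k < N" using enum_idx_in[OF fin(1) that] A by auto
    ultimately show ?thesis using that assms by simp
  qed
  have "length (sublist_on A y) = card A" "length (sublist_on B z) = card A" using AB by simp_all
  then show ?thesis by (subst dS_le_iff) (use g bound \<open>0 \<le> r\<close> in auto)
qed

lemma l1_dist_interleave:
  assumes J: "J \<subseteq> {..<N}" and "length a = card J" "length c = card J"
    and "length b = card ({..<N} - J)" "length d = card ({..<N} - J)"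
  shows "l1_dist (interleave N J a b) (interleave N J c d) = l1_dist a c + l1_dist b d"
  unfolding l1_dist_def using sum_interleave[OF assms, of "\<lambda>u w. \<Sum>i\<in>UNIV. \<bar>u $ i - w $ i\<bar>"]
  by simp

lemma pot_interleave:
  assumes J: "J \<subseteq> {..<N}" and "length a = card J" "length b = card ({..<N} - J)"
  shows "pot V (interleave N J a b) = pot V a + pot V b"
  unfolding pot_def using sum_interleave[OF J assms(2,2,3,3), of "\<lambda>u w. V u"] by simp

definition ordered_pairs :: "nat \<Rightarrow> (nat \<times> nat) set" where
  "ordered_pairs n = {(i, j). i < j \<and> j < n}"

lemma finite_ordered_pairs [simp]: "finite (ordered_pairs n)"
  by (rule finite_subset[of _ "{..<n} \<times> {..<n}"]) (auto simp: ordered_pairs_def)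

lemma inter_eq_sum_ordered_pairs:
  "inter U y = (\<Sum>(i, j)\<in>ordered_pairs (length y). U (y ! i - y ! j))"
proof -
  have "inter U y = (\<Sum>(j, i)\<in>Sigma {..<length y} (\<lambda>j. {..<j}). U (y ! i - y ! j))"
    unfolding inter_def by (simp add: sum.Sigma)
  also have "\<dots> = (\<Sum>(i, j)\<in>ordered_pairs (length y). U (y ! i - y ! j))"
    by (rule sum.reindex_bij_witness[of _ prod.swap prod.swap]) (auto simp: ordered_pairs_def)
  finally show ?thesis .
qed

lemma sum_ordered_pairs_within:
  assumes "J \<subseteq> {..<N}"
  shows "(\<Sum>p\<in>{p\<in>ordered_pairs N. fst p \<in> J \<and> snd p \<in> J}. g p) =
           (\<Sum>(k, l)\<in>ordered_pairs (card J). g (enum_idx J k, enum_idx J l))"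
proof -
  have fin: "finite J" using assms finite_subset by blast
  show ?thesis
  proof (rule sum.reindex_bij_witness[where j="map_prod (rank_idx J) (rank_idx J)"
                                      and i="map_prod (enum_idx J) (enum_idx J)"])
    fix p assume "p \<in> {p\<in>ordered_pairs N. fst p \<in> J \<and> snd p \<in> J}"
    then obtain i j where p: "p = (i, j)" "i \<in> J" "j \<in> J" "i < j" by (auto simp: ordered_pairs_def)
    have "rank_idx J i < card J" "rank_idx J j < card J" using rank_idx_less[OF fin] p by auto
    moreover from this have "rank_idx J i < rank_idx J j"
      using enum_idx_less_iff[OF fin] p by (metis enum_idx_rank_idx[OF fin])
    ultimately show "map_prod (rank_idx J) (rank_idx J) p \<in> ordered_pairs (card J)"
      and "map_prod (enum_idx J) (enum_idx J) (map_prod (rank_idx J) (rank_idx J) p) = p"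
      using p by (auto simp: ordered_pairs_def enum_idx_rank_idx[OF fin])
  next
    fix q assume "q \<in> ordered_pairs (card J)"
    then obtain k l where q: "q = (k, l)" "k < l" "l < card J" by (auto simp: ordered_pairs_def)
    have "enum_idx J k \<in> J" "enum_idx J l \<in> J" using enum_idx_in[OF fin] q by auto
    then show "map_prod (enum_idx J) (enum_idx J) q \<in> {p\<in>ordered_pairs N. fst p \<in> J \<and> snd p \<in> J}"
      and "map_prod (rank_idx J) (rank_idx J) (map_prod (enum_idx J) (enum_idx J) q) = q"
      using assms q enum_idx_strict_mono[OF fin] by (auto simp: ordered_pairs_def rank_idx_enum_idx[OF fin])
  qed (auto simp: enum_idx_rank_idx[OF fin])
qed

lemma inter_interleave:
  assumes J: "J \<subseteq> {..<N}" and a: "length a = card J" and b: "length b = card ({..<N} - J)"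
    and no_cross: "\<And>k l. k < card J \<Longrightarrow> l < card ({..<N} - J) \<Longrightarrow> U (a!k - b!l) = 0 \<and> U (b!l - a!k) = 0"
  shows "inter U (interleave N J a b) = inter U a + inter U b"
proof -
  define y Jc where "y = interleave N J a b" and "Jc = {..<N} - J"
  define g where "g p = U (y ! fst p - y ! snd p)" for p
  have fin: "finite J" "finite Jc" using J finite_subset by (auto simp: Jc_def)
  have Jc: "Jc \<subseteq> {..<N}" by (auto simp: Jc_def)
  have cross: "g p = 0" if "p \<in> ordered_pairs N" "\<not> (fst p \<in> J \<and> snd p \<in> J)" "\<not> (fst p \<in> Jc \<and> snd p \<in> Jc)" for p
  proof -
    have "fst p < N" "snd p < N" using that(1) by (auto simp: ordered_pairs_def)
    then have "(fst p \<in> J \<and> snd p \<in> Jc) \<or> (fst p \<in> Jc \<and> snd p \<in> J)" using that by (auto simp: Jc_def)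
    then show ?thesis
      using no_cross rank_idx_less fin \<open>fst p < N\<close> \<open>snd p < N\<close>
      by (auto simp: g_def y_def nth_interleave Jc_def)
  qed
  have "inter U y = (\<Sum>p\<in>ordered_pairs N. g p)"
    by (simp add: inter_eq_sum_ordered_pairs y_def g_def case_prod_beta)
  also have "\<dots> = (\<Sum>p\<in>ordered_pairs N. (if fst p \<in> J \<and> snd p \<in> J then g p else 0) +
                                          (if fst p \<in> Jc \<and> snd p \<in> Jc then g p else 0))"
    using cross by (intro sum.cong) (auto simp: Jc_def)
  also have "\<dots> = (\<Sum>p\<in>{p\<in>ordered_pairs N. fst p \<in> J \<and> snd p \<in> J}. g p)
                 + (\<Sum>p\<in>{p\<in>ordered_pairs N. fst p \<in> Jc \<and> snd p \<in> Jc}. g p)"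
    by (simp add: sum.distrib sum.inter_filter)
  also have "\<dots> = (\<Sum>(k, l)\<in>ordered_pairs (card J). U (a ! k - a ! l))
                 + (\<Sum>(k, l)\<in>ordered_pairs (card Jc). U (b ! k - b ! l))"
    unfolding sum_ordered_pairs_within[OF J] sum_ordered_pairs_within[OF Jc]
    by (intro arg_cong2[where f="(+)"] sum.cong)
      (auto simp: ordered_pairs_def g_def y_def nth_interleave_enum_idx[OF J] Jc_def)
  also have "\<dots> = inter U a + inter U b"
    by (simp add: inter_eq_sum_ordered_pairs a b Jc_def)
  finally show ?thesis by (simp add: y_def)
qed

section \<open>The cube as a union of product cubes\<close>

locale partially_interactive_cube =
  fixes U :: "'d::finite site \<Rightarrow> real" and N N1 N2 :: nat and S1 S2 :: "'d site set"
    and L :: real and x :: "'d config"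
  assumes N1_plus_N2: "N1 + N2 = N"
    and disjoint: "S1 \<inter> S2 = {}"
    and separated: "\<forall>a\<in>S1. \<forall>b\<in>S2. C_U U \<le> site_norm (a - b)"
    and counts: "\<forall>y\<in>cube N L x. card {j. j < N \<and> y ! j \<in> S1} = N1 \<and> card {j. j < N \<and> y ! j \<in> S2} = N2"
    and length_x: "length x = N"
    and L_nonneg: "0 \<le> L"
    and finite_support: "finite {u. U u \<noteq> 0}"
begin

definition S1_slots :: "'d config \<Rightarrow> nat set" where
  "S1_slots y = {j. j < N \<and> y ! j \<in> S1}"

definition slot_sets :: "nat set set" where
  "slot_sets = {J. J \<subseteq> {..<N} \<and> card J = N1}"

definition x1 :: "'d config" where
  "x1 = sublist_on (S1_slots x) x"

definition x2 :: "'d config" where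
  "x2 = sublist_on ({..<N} - S1_slots x) x"

definition Cube :: "'d config set" where
  "Cube = cube N L x"

definition Cube1 :: "'d config set" where
  "Cube1 = cube N1 L x1"

definition Cube2 :: "'d config set" where
  "Cube2 = cube N2 L x2"

lemma length_Cube: "y \<in> Cube \<Longrightarrow> length y = N"
  and length_Cube1: "a \<in> Cube1 \<Longrightarrow> length a = N1"
  and length_Cube2: "b \<in> Cube2 \<Longrightarrow> length b = N2"
  by (simp_all add: Cube_def Cube1_def Cube2_def cube_def)

lemma S1_slots_subset: "S1_slots y \<subseteq> {..<N}"
  by (auto simp: S1_slots_def)

lemma finite_S1_slots: "finite (S1_slots y)"
  using S1_slots_subset finite_subset by blast

lemma card_S1_slots: "y \<in> Cube \<Longrightarrow> card (S1_slots y) = N1"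
  using counts by (simp add: Cube_def S1_slots_def)

lemma in_S2_if_not_in_S1:
  assumes y: "y \<in> Cube" and "j < N" "y ! j \<notin> S1"
  shows "y ! j \<in> S2"
proof (rule ccontr)
  assume "y ! j \<notin> S2"
  let ?A = "{j. j < N \<and> y ! j \<in> S1}" and ?B = "{j. j < N \<and> y ! j \<in> S2}"
  have "card (?A \<union> ?B) = N1 + N2" using counts y disjoint by (subst card_Un_disjoint) (auto simp: Cube_def)
  moreover have "?A \<union> ?B \<subseteq> {..<N} - {j}" using assms \<open>y ! j \<notin> S2\<close> by auto
  then have "card (?A \<union> ?B) \<le> card ({..<N} - {j})" by (intro card_mono) auto
  ultimately show False using assms N1_plus_N2 by simp
qed

lemma
  assumes "J \<in> slot_sets"
  shows slot_set_subset: "J \<subseteq> {..<N}"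
    and finite_slot_set: "finite J"
    and card_slot_set: "card J = N1"
    and card_slot_set_compl: "card ({..<N} - J) = N2"
  using assms N1_plus_N2 by (auto simp: slot_sets_def card_Diff_subset finite_subset)

lemma S1_slots_in_slot_sets: "y \<in> Cube \<Longrightarrow> S1_slots y \<in> slot_sets"
  using card_S1_slots S1_slots_subset by (simp add: slot_sets_def)

lemma x_in_Cube: "x \<in> Cube"
  using center_in_cube[OF L_nonneg, of x] length_x by (simp add: Cube_def)

lemma length_x1: "length x1 = N1" and length_x2: "length x2 = N2"
  using S1_slots_in_slot_sets[OF x_in_Cube]
  by (simp_all add: x1_def x2_def card_slot_set card_slot_set_compl)

lemma finite_Cube: "finite Cube" and finite_Cube1: "finite Cube1" and finite_Cube2: "finite Cube2"
  using finite_cube length_x length_x1 length_x2 by (simp_all add: Cube_def Cube1_def Cube2_def)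

lemma x1_in_Cube1: "x1 \<in> Cube1" and x2_in_Cube2: "x2 \<in> Cube2"
  using center_in_cube[OF L_nonneg, of x1] center_in_cube[OF L_nonneg, of x2] length_x1 length_x2
  by (simp_all add: Cube1_def Cube2_def)

lemma x_eq_interleave: "x = interleave N (S1_slots x) x1 x2"
  using interleave_sublist_on[OF S1_slots_subset length_x] by (simp add: x1_def x2_def)

(* An S1 particle of y matched to a particle of x outside S1 could be moved onto its partner,
   giving a configuration of the cube with only N1 - 1 particles in S1. *)
lemma matching_preserves_S1_slots:
  assumes y: "y \<in> Cube" and f: "bij_betw f {..<N} {..<N}"
    and match: "\<forall>j<N. site_norm (y!j - x!(f j)) \<le> \<lfloor>L\<rfloor>"
  shows "f ` S1_slots y = S1_slots x"
proof -
  have "f j \<in> S1_slots x" if j: "j \<in> S1_slots y" for j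
  proof (rule ccontr)
    assume fj: "f j \<notin> S1_slots x"
    define z where "z = y[j := x ! f j]"
    have "j < N" using j by (simp add: S1_slots_def)
    then have "length z = N" "\<forall>i<N. site_norm (z!i - x!(f i)) \<le> \<lfloor>L\<rfloor>"
      using match L_nonneg length_Cube[OF y] by (auto simp: z_def nth_list_update)
    then have "z \<in> Cube"
      using dS_le_iff[of z N x "\<lfloor>L\<rfloor>"] length_x f L_nonneg by (auto simp: Cube_def mem_cube_iff)
    moreover have "S1_slots z = S1_slots y - {j}"
      using fj f \<open>j < N\<close> length_Cube[OF y]
      by (auto simp: S1_slots_def z_def nth_list_update dest: bij_betwE)
    ultimately have "card (S1_slots y - {j}) = card (S1_slots y)"
      using card_S1_slots[OF y] card_S1_slots by metis
    moreover have "card (S1_slots y - {j}) < card (S1_slots y)"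
      by (rule card_Diff1_less[OF finite_S1_slots j])
    ultimately show False by simp
  qed
  then have sub: "f ` S1_slots y \<subseteq> S1_slots x" by blast
  have "card (f ` S1_slots y) = card (S1_slots x)"
    using f S1_slots_subset card_S1_slots[OF y] card_S1_slots[OF x_in_Cube]
    by (subst card_image) (auto simp: bij_betw_def intro: inj_on_subset)
  then show ?thesis by (rule card_subset_eq[OF finite_S1_slots sub])
qed

lemma sublists_in_Cube12:
  assumes y: "y \<in> Cube"
  shows "sublist_on (S1_slots y) y \<in> Cube1" "sublist_on ({..<N} - S1_slots y) y \<in> Cube2"
proof -
  obtain f where f: "bij_betw f {..<N} {..<N}" "\<forall>j<N. site_norm (y!j - x!(f j)) \<le> \<lfloor>L\<rfloor>"
    using y dS_le_iff[of y N x "\<lfloor>L\<rfloor>"] length_Cube[OF y] length_x by (auto simp: Cube_def mem_cube_iff)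
  have S1: "f ` S1_slots y = S1_slots x" using matching_preserves_S1_slots[OF y f] .
  have "f ` ({..<N} - S1_slots y) = f ` {..<N} - f ` S1_slots y"
    using f(1) S1_slots_subset by (intro inj_on_image_set_diff) (auto simp: bij_betw_def)
  then have S2: "f ` ({..<N} - S1_slots y) = {..<N} - S1_slots x"
    using f(1) S1 by (simp add: bij_betw_def)
  have L: "0 \<le> \<lfloor>L\<rfloor>" using L_nonneg by simp
  have "dS (sublist_on (S1_slots y) y) x1 \<le> \<lfloor>L\<rfloor>"
    unfolding x1_def by (rule dS_sublist_on_le[OF length_Cube[OF y] length_x f L S1_slots_subset S1])
  moreover have "dS (sublist_on ({..<N} - S1_slots y) y) x2 \<le> \<lfloor>L\<rfloor>"
    unfolding x2_def by (rule dS_sublist_on_le[OF length_Cube[OF y] length_x f L _ S2]) auto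
  ultimately show "sublist_on (S1_slots y) y \<in> Cube1" "sublist_on ({..<N} - S1_slots y) y \<in> Cube2"
    using S1_slots_in_slot_sets[OF y] card_S1_slots[OF y]
    by (simp_all add: Cube1_def Cube2_def mem_cube_iff card_slot_set_compl)
qed

lemma interleave_in_Cube:
  assumes a: "a \<in> Cube1" and b: "b \<in> Cube2" and J: "J \<in> slot_sets"
  shows "interleave N J a b \<in> Cube"
proof -
  have x: "S1_slots x \<in> slot_sets" by (rule S1_slots_in_slot_sets[OF x_in_Cube])
  have "dS (interleave N J a b) (interleave N (S1_slots x) x1 x2) \<le> \<lfloor>L\<rfloor>"
    using a b J x length_x1 length_x2
    by (intro dS_interleave_le)
      (auto simp: slot_set_subset card_slot_set card_slot_set_compl Cube1_def Cube2_def mem_cube_iff)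
  then show ?thesis by (simp add: Cube_def mem_cube_iff flip: x_eq_interleave)
qed

lemma Cube1_in_S1:
  assumes a: "a \<in> Cube1" and k: "k < N1"
  shows "a ! k \<in> S1"
proof -
  define I where "I = S1_slots x"
  have I: "I \<in> slot_sets" unfolding I_def by (rule S1_slots_in_slot_sets[OF x_in_Cube])
  define w where "w = interleave N I a x2"
  have w: "w \<in> Cube"
    unfolding w_def by (rule interleave_in_Cube[OF a x2_in_Cube2 I])
  have "S1_slots w \<subseteq> I"
  proof
    fix j assume j: "j \<in> S1_slots w"
    show "j \<in> I"
    proof (rule ccontr)
      assume "j \<notin> I"
      then have "j \<in> {..<N} - I" "rank_idx ({..<N} - I) j < card ({..<N} - I)"
        using j by (auto simp: S1_slots_def intro!: rank_idx_less)
      then have "w ! j \<notin> S1"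
        using enum_idx_rank_idx[of "{..<N} - I" j]
        by (auto simp: w_def nth_interleave x2_def I_def S1_slots_def)
      then show False using j by (simp add: S1_slots_def)
    qed
  qed
  then have "S1_slots w = I"
    using card_S1_slots[OF w] card_slot_set[OF I] slot_set_subset[OF I] finite_subset
    by (metis card_subset_eq finite_lessThan)
  moreover have "enum_idx I k \<in> I"
    using k by (simp add: enum_idx_in finite_slot_set[OF I] card_slot_set[OF I])
  moreover have "w ! enum_idx I k = a ! k"
    using k I by (simp add: w_def nth_interleave_enum_idx slot_set_subset card_slot_set)
  ultimately show ?thesis by (auto simp: S1_slots_def)
qed

lemma x1_in_S1: "k < N1 \<Longrightarrow> x1 ! k \<in> S1"
  using S1_slots_in_slot_sets[OF x_in_Cube] enum_idx_in[OF finite_S1_slots, of k x]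
  by (simp add: x1_def card_slot_set S1_slots_def)

lemma S1_slots_eq_if_superset:
  assumes "y \<in> Cube" "J \<in> slot_sets" "J \<subseteq> S1_slots y"
  shows "S1_slots y = J"
  using card_subset_eq[OF finite_S1_slots assms(3)] card_S1_slots[OF assms(1)] card_slot_set[OF assms(2)]
  by simp

lemma Cube2_in_S2:
  assumes b: "b \<in> Cube2" and k: "k < N2"
  shows "b ! k \<in> S2"
proof -
  define I where "I = S1_slots x"
  have I: "I \<in> slot_sets" unfolding I_def by (rule S1_slots_in_slot_sets[OF x_in_Cube])
  define w where "w = interleave N I x1 b"
  have w: "w \<in> Cube" unfolding w_def by (rule interleave_in_Cube[OF x1_in_Cube1 b I])
  have "I \<subseteq> S1_slots w"
  proof
    fix j assume j: "j \<in> I"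
    then have "rank_idx I j < N1" using rank_idx_less[OF finite_slot_set[OF I] j] card_slot_set[OF I] by simp
    then show "j \<in> S1_slots w"
      using j slot_set_subset[OF I] x1_in_S1 by (auto simp: w_def nth_interleave S1_slots_def)
  qed
  then have "S1_slots w = I" by (rule S1_slots_eq_if_superset[OF w I])
  moreover have j: "enum_idx ({..<N} - I) k \<in> {..<N} - I"
    using k card_slot_set_compl[OF I] by (simp add: enum_idx_in del: Diff_iff)
  ultimately have "w ! enum_idx ({..<N} - I) k \<in> S2"
    using in_S2_if_not_in_S1[OF w] by (auto simp: S1_slots_def)
  moreover have "w ! enum_idx ({..<N} - I) k = b ! k"
    using k by (simp add: w_def nth_interleave_enum_idx slot_set_subset[OF I] card_slot_set_compl[OF I])
  ultimately show ?thesis by simp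
qed

lemma S1_slots_interleave:
  assumes a: "a \<in> Cube1" and b: "b \<in> Cube2" and J: "J \<in> slot_sets"
  shows "S1_slots (interleave N J a b) = J"
proof -
  have "j \<in> S1_slots (interleave N J a b) \<longleftrightarrow> j \<in> J" if "j < N" for j
  proof (cases "j \<in> J")
    case True
    then have "rank_idx J j < N1" using rank_idx_less[OF finite_slot_set[OF J]] card_slot_set[OF J] by metis
    then show ?thesis using True that Cube1_in_S1[OF a] by (simp add: S1_slots_def nth_interleave)
  next
    case False
    then have "j \<in> {..<N} - J" using that by simp
    then have "rank_idx ({..<N} - J) j < N2" using rank_idx_less card_slot_set_compl[OF J] by fastforce
    then show ?thesis using False that Cube2_in_S2[OF b] disjoint by (auto simp: S1_slots_def nth_interleave)
  qed
  then show ?thesis using slot_set_subset[OF J] S1_slots_subset by blast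
qed

lemma S1_slots_neighbour:
  assumes y: "y \<in> Cube" and y': "y' \<in> Cube" and "l1_dist y' y = 1"
  shows "S1_slots y' = S1_slots y"
proof (rule ccontr)
  assume ne: "S1_slots y' \<noteq> S1_slots y"
  have same_card: "card (S1_slots y') = card (S1_slots y)" using card_S1_slots y y' by simp
  then obtain j1 where j1: "j1 \<in> S1_slots y" "j1 \<notin> S1_slots y'"
    using ne card_subset_eq finite_S1_slots by (metis subsetI)
  obtain j2 where j2: "j2 \<in> S1_slots y'" "j2 \<notin> S1_slots y"
    using ne same_card card_subset_eq finite_S1_slots by (metis subsetI)
  have "2 \<le> l1_dist y' y"
    using j1 j2 length_Cube[OF y] length_Cube[OF y']
    by (intro l1_dist_ge_2[of y' y j1 j2]) (auto simp: S1_slots_def)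
  then show False using assms by simp
qed

lemma bij_betw_interleave_fiber:
  assumes J: "J \<in> slot_sets"
  shows "bij_betw (\<lambda>(a, b). interleave N J a b) (Cube1 \<times> Cube2) {y \<in> Cube. S1_slots y = J}"
proof (rule bij_betw_byWitness[where f'="\<lambda>y. (sublist_on J y, sublist_on ({..<N} - J) y)"])
  show "\<forall>p\<in>Cube1 \<times> Cube2. (\<lambda>y. (sublist_on J y, sublist_on ({..<N} - J) y)) ((\<lambda>(a, b). interleave N J a b) p) = p"
    using J by (auto simp: sublist_on_interleave slot_set_subset card_slot_set card_slot_set_compl
                           length_Cube1 length_Cube2)
  show "\<forall>y\<in>{y \<in> Cube. S1_slots y = J}.
          (\<lambda>(a, b). interleave N J a b) (sublist_on J y, sublist_on ({..<N} - J) y) = y"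
    using J by (auto simp: interleave_sublist_on slot_set_subset length_Cube)
  show "(\<lambda>(a, b). interleave N J a b) ` (Cube1 \<times> Cube2) \<subseteq> {y \<in> Cube. S1_slots y = J}"
    using J by (auto simp: interleave_in_Cube S1_slots_interleave)
  show "(\<lambda>y. (sublist_on J y, sublist_on ({..<N} - J) y)) ` {y \<in> Cube. S1_slots y = J} \<subseteq> Cube1 \<times> Cube2"
    using sublists_in_Cube12 by auto
qed

lemma sum_fiber:
  assumes J: "J \<in> slot_sets"
  shows "(\<Sum>y\<in>Cube. if S1_slots y = J then h y else 0) = (\<Sum>a\<in>Cube1. \<Sum>b\<in>Cube2. h (interleave N J a b))"
proof -
  have "(\<Sum>y\<in>Cube. if S1_slots y = J then h y else 0) = (\<Sum>y\<in>{y \<in> Cube. S1_slots y = J}. h y)"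
    by (simp add: sum.inter_filter finite_Cube)
  also have "\<dots> = (\<Sum>(a, b)\<in>Cube1 \<times> Cube2. h (interleave N J a b))"
    using sum.reindex_bij_betw[OF bij_betw_interleave_fiber[OF J], of h] by (simp add: case_prod_beta)
  also have "\<dots> = (\<Sum>a\<in>Cube1. \<Sum>b\<in>Cube2. h (interleave N J a b))"
    by (simp add: sum.cartesian_product)
  finally show ?thesis .
qed

lemma card_Cube: "card Cube = card slot_sets * (card Cube1 * card Cube2)"
proof -
  have "card Cube = (\<Sum>y\<in>Cube. \<Sum>J\<in>slot_sets. if S1_slots y = J then 1 else 0)"
    using S1_slots_in_slot_sets finite_subset[of slot_sets "Pow {..<N}"]
    by (simp add: slot_sets_def sum.delta)
  also have "\<dots> = (\<Sum>J\<in>slot_sets. \<Sum>y\<in>Cube. if S1_slots y = J then 1 else 0)"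
    by (rule sum.swap)
  also have "\<dots> = (\<Sum>J\<in>slot_sets. card Cube1 * card Cube2)"
    by (simp add: sum_fiber)
  finally show ?thesis by simp
qed

end

section \<open>Product eigenfunctions\<close>

lemma cmod_le_1_if_unit_norm:
  assumes "sqrt (\<Sum>y\<in>A. (cmod (g y))\<^sup>2) = 1" "finite A" "b \<in> A"
  shows "cmod (g b) \<le> 1"
proof -
  have "(cmod (g b))\<^sup>2 \<le> (\<Sum>y\<in>A. (cmod (g y))\<^sup>2)" by (rule member_le_sum) (use assms in auto)
  also have "\<dots> = 1" using assms(1) by (metis real_sqrt_eq_1_iff)
  finally show ?thesis by (simp add: power_le_one_iff)
qed

lemma unit_norm_if_inner_self_1:
  assumes "(\<Sum>y\<in>A. h y * cnj (h y)) = 1"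
  shows "sqrt (\<Sum>y\<in>A. (cmod (h y))\<^sup>2) = 1"
proof -
  have "complex_of_real (\<Sum>y\<in>A. (cmod (h y))\<^sup>2) = (\<Sum>y\<in>A. h y * cnj (h y))"
    by (simp only: of_real_sum complex_norm_square)
  then show ?thesis using assms by (metis of_real_eq_1_iff real_sqrt_one)
qed

lemma inj_on_if_orthonormal:
  assumes "\<And>i j. i \<in> I \<Longrightarrow> j \<in> I \<Longrightarrow> (\<Sum>y\<in>A. F i y * cnj (F j y)) = (if i = j then 1 else 0)"
  shows "inj_on F I"
proof (rule inj_onI)
  fix i j assume "i \<in> I" "j \<in> I" "F i = F j"
  then show "i = j" using assms[of i i] assms[of i j] by (auto split: if_splits)
qed

context partially_interactive_cube
begin

definition product_state ::
  "nat set \<Rightarrow> ('d config \<Rightarrow> complex) \<Rightarrow> ('d config \<Rightarrow> complex) \<Rightarrow> 'd config \<Rightarrow> complex" where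
  "product_state J f g y =
     (if y \<in> Cube \<and> S1_slots y = J then f (sublist_on J y) * g (sublist_on ({..<N} - J) y) else 0)"

lemma product_state_interleave:
  "J \<in> slot_sets \<Longrightarrow> a \<in> Cube1 \<Longrightarrow> b \<in> Cube2 \<Longrightarrow> product_state J f g (interleave N J a b) = f a * g b"
  by (simp add: product_state_def interleave_in_Cube S1_slots_interleave sublist_on_interleave
                slot_set_subset card_slot_set card_slot_set_compl length_Cube1 length_Cube2)

lemma product_state_eq_interleave:
  assumes "J \<in> slot_sets" "y \<in> Cube" "S1_slots y = J"
  obtains a b where "a \<in> Cube1" "b \<in> Cube2" "y = interleave N J a b"
    "product_state J f g y = f a * g b"
  using assms sublists_in_Cube12[OF assms(2)] interleave_sublist_on[OF slot_set_subset length_Cube]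
  by (metis product_state_interleave)

lemma inner_product_state:
  assumes J: "J \<in> slot_sets" and K: "K \<in> slot_sets"
  shows "(\<Sum>y\<in>Cube. product_state J f g y * cnj (product_state K f' g' y)) =
           (if J = K then (\<Sum>a\<in>Cube1. f a * cnj (f' a)) * (\<Sum>b\<in>Cube2. g b * cnj (g' b)) else 0)"
proof (cases "J = K")
  case True
  have "(\<Sum>y\<in>Cube. product_state J f g y * cnj (product_state K f' g' y)) =
        (\<Sum>y\<in>Cube. if S1_slots y = J then product_state J f g y * cnj (product_state J f' g' y) else 0)"
    using True by (intro sum.cong) (auto simp: product_state_def)
  also have "\<dots> = (\<Sum>a\<in>Cube1. \<Sum>b\<in>Cube2. f a * cnj (f' a) * (g b * cnj (g' b)))"
    by (simp add: sum_fiber[OF J] product_state_interleave[OF J] mult_ac)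
  finally show ?thesis using True by (simp add: sum_product)
next
  case False
  then have "product_state J f g y * cnj (product_state K f' g' y) = 0" for y
    by (simp add: product_state_def)
  then show ?thesis by (simp only: sum.neutral_const False if_False)
qed

lemma product_state_localizing:
  assumes J: "J \<in> slot_sets" and "0 \<le> m"
    and c1: "c1 \<in> Cube1" and f: "localizing_at \<tau> L m Cube1 f c1"
    and c2: "c2 \<in> Cube2" and g: "localizing_at \<tau> L m Cube2 g c2"
    and y: "y \<in> Cube" and far: "L powr \<tau> \<le> real_of_int (dS y (interleave N J c1 c2))"
  shows "cmod (product_state J f g y) \<le> exp (- m * real_of_int (dS y (interleave N J c1 c2)))"
proof (cases "S1_slots y = J")
  case False
  then show ?thesis by (simp add: product_state_def)
next
  case True
  then obtain a b where a: "a \<in> Cube1" and b: "b \<in> Cube2" and y_eq: "y = interleave N J a b"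
    and factorised: "product_state J f g y = f a * g b"
    using product_state_eq_interleave[OF J y] by metis
  define D where "D = dS y (interleave N J c1 c2)"
  have decay: "cmod (h z) \<le> exp (- m * D)"
    if "localizing_at \<tau> L m C h c" "z \<in> C" "D \<le> dS z c" for C h z c
  proof -
    have "cmod (h z) \<le> exp (- m * dS z c)"
      using that far by (auto simp: localizing_at_def D_def)
    also have "\<dots> \<le> exp (- m * D)" using that(3) \<open>0 \<le> m\<close> by (simp add: mult_left_mono)
    finally show ?thesis .
  qed
  have fa: "cmod (f a) \<le> 1" and gb: "cmod (g b) \<le> 1"
    using f g a b finite_Cube1 finite_Cube2
    by (auto intro: cmod_le_1_if_unit_norm simp: localizing_at_def)
  have "D \<le> max (dS a c1) (dS b c2)"
    unfolding D_def y_eq using a b c1 c2 J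
    by (intro dS_interleave_le)
      (auto simp: slot_set_subset card_slot_set card_slot_set_compl length_Cube1 length_Cube2)
  then consider "D \<le> dS a c1" | "D \<le> dS b c2" by linarith
  then have "cmod (f a) * cmod (g b) \<le> exp (- m * D)"
  proof cases
    case 1
    then have "cmod (f a) * cmod (g b) \<le> exp (- m * D) * 1"
      using decay[OF f a] gb by (intro mult_mono) auto
    then show ?thesis by simp
  next
    case 2
    then have "cmod (f a) * cmod (g b) \<le> 1 * exp (- m * D)"
      using decay[OF g b] fa by (intro mult_mono) auto
    then show ?thesis by simp
  qed
  then show ?thesis by (simp add: factorised norm_mult D_def)
qed

lemma neighbour_sum_product_state:
  assumes J: "J \<in> slot_sets" and a: "a \<in> Cube1" and b: "b \<in> Cube2"
  defines "y \<equiv> interleave N J a b"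
  shows "(\<Sum>y'\<in>{y'\<in>Cube. length y' = length y \<and> l1_dist y' y = 1}. product_state J f g y') =
           (\<Sum>a'\<in>{a'\<in>Cube1. length a' = length a \<and> l1_dist a' a = 1}. f a') * g b
         + f a * (\<Sum>b'\<in>{b'\<in>Cube2. length b' = length b \<and> l1_dist b' b = 1}. g b')"
proof -
  have y: "y \<in> Cube" "S1_slots y = J"
    unfolding y_def using interleave_in_Cube[OF a b J] S1_slots_interleave[OF a b J] by auto
  have l1: "l1_dist (interleave N J a' b') y = l1_dist a' a + l1_dist b' b"
    if "a' \<in> Cube1" "b' \<in> Cube2" for a' b'
    unfolding y_def using that a b J
    by (intro l1_dist_interleave)
      (auto simp: slot_set_subset card_slot_set card_slot_set_compl length_Cube1 length_Cube2)
  have split: "(if l1_dist a' a + l1_dist b' b = 1 then f a' * g b' else 0) =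
               (if l1_dist a' a = 1 \<and> b' = b then f a' * g b' else 0) +
               (if a' = a \<and> l1_dist b' b = 1 then f a' * g b' else 0)"
    if "a' \<in> Cube1" "b' \<in> Cube2" for a' b'
    using that a b l1_dist_nonneg[of a' a] l1_dist_nonneg[of b' b]
      l1_dist_eq_0_iff[of a' a] l1_dist_eq_0_iff[of b' b]
    by (auto simp: length_Cube1 length_Cube2)
  have "(\<Sum>y'\<in>{y'\<in>Cube. length y' = length y \<and> l1_dist y' y = 1}. product_state J f g y') =
        (\<Sum>y'\<in>Cube. if S1_slots y' = J then (if l1_dist y' y = 1 then product_state J f g y' else 0) else 0)"
    using y S1_slots_neighbour[OF y(1)] length_Cube
    by (auto simp: sum.inter_filter[symmetric] finite_Cube product_state_def intro!: sum.cong)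
  also have "\<dots> = (\<Sum>a'\<in>Cube1. \<Sum>b'\<in>Cube2. if l1_dist a' a + l1_dist b' b = 1 then f a' * g b' else 0)"
    by (subst sum_fiber[OF J]) (auto simp: l1 product_state_interleave[OF J] intro!: sum.cong)
  also have "\<dots> = (\<Sum>a'\<in>Cube1. \<Sum>b'\<in>Cube2. (if l1_dist a' a = 1 \<and> b' = b then f a' * g b' else 0) +
                                             (if a' = a \<and> l1_dist b' b = 1 then f a' * g b' else 0))"
    by (intro sum.cong refl) (simp add: split)
  also have "\<dots> = (\<Sum>a'\<in>Cube1. if l1_dist a' a = 1 then f a' * g b else 0)
                 + (\<Sum>b'\<in>Cube2. if l1_dist b' b = 1 then f a * g b' else 0)"
  proof -
    have "(\<Sum>b'\<in>Cube2. if l1_dist a' a = 1 \<and> b' = b then f a' * g b' else 0) =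
          (if l1_dist a' a = 1 then f a' * g b else 0)" for a'
      using b by (cases "l1_dist a' a = 1") (simp_all add: sum.delta sum.delta' finite_Cube2)
    moreover have "(\<Sum>a'\<in>Cube1. if a' = a \<and> l1_dist b' b = 1 then f a' * g b' else 0) =
          (if l1_dist b' b = 1 then f a * g b' else 0)" for b'
      using a by (cases "l1_dist b' b = 1") (simp_all add: sum.delta sum.delta' finite_Cube1)
    then have "(\<Sum>a'\<in>Cube1. \<Sum>b'\<in>Cube2. if a' = a \<and> l1_dist b' b = 1 then f a' * g b' else 0) =
               (\<Sum>b'\<in>Cube2. if l1_dist b' b = 1 then f a * g b' else 0)"
      by (subst sum.swap) simp
    ultimately show ?thesis by (simp add: sum.distrib)
  qed
  also have "\<dots> = (\<Sum>a'\<in>{a'\<in>Cube1. length a' = length a \<and> l1_dist a' a = 1}. f a') * g b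
                 + f a * (\<Sum>b'\<in>{b'\<in>Cube2. length b' = length b \<and> l1_dist b' b = 1}. g b')"
    using a b finite_Cube1 finite_Cube2
    by (simp add: sum.inter_filter length_Cube1 length_Cube2 sum_distrib_left sum_distrib_right
                  if_distrib[of "\<lambda>t. t * g b"] if_distrib[of "\<lambda>t. f a * t"] cong: if_cong)
  finally show ?thesis .
qed

lemma product_state_eigen:
  assumes J: "J \<in> slot_sets"
    and f: "\<forall>a\<in>Cube1. ham_restr lam V U Cube1 f a = E1 * f a"
    and g: "\<forall>b\<in>Cube2. ham_restr lam V U Cube2 g b = E2 * g b"
    and y: "y \<in> Cube"
  shows "ham_restr lam V U Cube (product_state J f g) y = (E1 + E2) * product_state J f g y"
proof (cases "S1_slots y = J")
  case False
  then have "product_state J f g y' = 0" if "y' \<in> Cube" "l1_dist y' y = 1" for y'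
    using that S1_slots_neighbour[OF y] by (auto simp: product_state_def)
  then show ?thesis using y False by (simp add: ham_restr_def product_state_def)
next
  case True
  then obtain a b where a: "a \<in> Cube1" and b: "b \<in> Cube2" and y_eq: "y = interleave N J a b"
    and factorised: "product_state J f g y = f a * g b"
    using product_state_eq_interleave[OF J y] by metis
  have lengths: "length a = card J" "length b = card ({..<N} - J)"
    using a b J by (simp_all add: length_Cube1 length_Cube2 card_slot_set card_slot_set_compl)
  have "U (a ! k - b ! l) = 0 \<and> U (b ! l - a ! k) = 0" if "k < card J" "l < card ({..<N} - J)" for k l
  proof -
    have "a ! k \<in> S1" "b ! l \<in> S2"
      using that Cube1_in_S1[OF a] Cube2_in_S2[OF b] card_slot_set[OF J] card_slot_set_compl[OF J] by auto
    then have "C_U U \<le> site_norm (a ! k - b ! l)" "C_U U \<le> site_norm (b ! l - a ! k)"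
      using separated by (auto simp: site_norm_commute[of "b ! l"])
    then show ?thesis using interaction_vanishes_far[OF finite_support] by blast
  qed
  then have inter: "inter U y = inter U a + inter U b"
    unfolding y_eq by (rule inter_interleave[OF slot_set_subset[OF J] lengths])
  have pot: "pot V y = pot V a + pot V b"
    unfolding y_eq by (rule pot_interleave[OF slot_set_subset[OF J] lengths])
  define s1 s2 where
    "s1 = (\<Sum>a'\<in>{a'\<in>Cube1. length a' = length a \<and> l1_dist a' a = 1}. f a')" and
    "s2 = (\<Sum>b'\<in>{b'\<in>Cube2. length b' = length b \<and> l1_dist b' b = 1}. g b')"
  define c1 c2 where "c1 = lam * pot V a + inter U a" and "c2 = lam * pot V b + inter U b"
  have eigen1: "- s1 + complex_of_real c1 * f a = E1 * f a"
    and eigen2: "- s2 + complex_of_real c2 * g b = E2 * g b"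
    using f a g b by (simp_all add: ham_restr_def s1_def s2_def c1_def c2_def)
  have "ham_restr lam V U Cube (product_state J f g) y =
        - (s1 * g b + f a * s2) + complex_of_real (c1 + c2) * (f a * g b)"
    using y pot inter factorised neighbour_sum_product_state[OF J a b, of f g]
    by (simp add: ham_restr_def c1_def c2_def s1_def s2_def algebra_simps flip: y_eq)
  also have "\<dots> = (- s1 + complex_of_real c1 * f a) * g b + f a * (- s2 + complex_of_real c2 * g b)"
    by (simp add: algebra_simps)
  also have "\<dots> = (E1 + E2) * product_state J f g y"
    by (simp only: eigen1 eigen2 factorised) (simp add: algebra_simps)
  finally show ?thesis .
qed

lemma m_localizing_cube_if_factors:
  assumes "0 \<le> m"
    and loc1: "m_localizing_cube \<tau> m lam V U N1 L x1"
    and loc2: "m_localizing_cube \<tau> m lam V U N2 L x2"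
  shows "m_localizing_cube \<tau> m lam V U N L x"
proof -
  obtain B1 where card_B1: "card B1 = card Cube1"
    and orth1: "\<forall>\<phi>\<in>B1. \<forall>\<psi>\<in>B1. (\<Sum>y\<in>Cube1. \<phi> y * cnj (\<psi> y)) = (if \<phi> = \<psi> then 1 else 0)"
    and eigen1: "\<forall>\<phi>\<in>B1. \<exists>E. \<forall>y\<in>Cube1. ham_restr lam V U Cube1 \<phi> y = E * \<phi> y"
    and loc_fun1: "\<forall>\<phi>\<in>B1. m_localizing_fun \<tau> L m Cube1 \<phi>"
    using loc1 unfolding m_localizing_cube_def Let_def Cube1_def[symmetric] by blast
  obtain B2 where card_B2: "card B2 = card Cube2"
    and orth2: "\<forall>\<phi>\<in>B2. \<forall>\<psi>\<in>B2. (\<Sum>y\<in>Cube2. \<phi> y * cnj (\<psi> y)) = (if \<phi> = \<psi> then 1 else 0)"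
    and eigen2: "\<forall>\<phi>\<in>B2. \<exists>E. \<forall>y\<in>Cube2. ham_restr lam V U Cube2 \<phi> y = E * \<phi> y"
    and loc_fun2: "\<forall>\<phi>\<in>B2. m_localizing_fun \<tau> L m Cube2 \<phi>"
    using loc2 unfolding m_localizing_cube_def Let_def Cube2_def[symmetric] by blast
  define I where "I = slot_sets \<times> B1 \<times> B2"
  define F where "F = (\<lambda>(J, f, g). product_state J f g)"
  have orth: "(\<Sum>y\<in>Cube. F i y * cnj (F i' y)) = (if i = i' then 1 else 0)"
    if mem: "i \<in> I" "i' \<in> I" for i i'
  proof -
    obtain J f g K f' g' where "i = (J, f, g)" "i' = (K, f', g')" "J \<in> slot_sets" "K \<in> slot_sets"
      "f \<in> B1" "f' \<in> B1" "g \<in> B2" "g' \<in> B2"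
      using mem unfolding I_def by (metis mem_Times_iff prod.collapse)
    then show ?thesis using orth1 orth2 by (auto simp: F_def inner_product_state)
  qed
  then have inj: "inj_on F I" by (rule inj_on_if_orthonormal)
  have "card (F ` I) = card Cube"
    using card_image[OF inj] card_B1 card_B2 card_Cube by (simp add: I_def card_cartesian_product)
  moreover have "\<forall>\<phi>\<in>F ` I. \<forall>\<psi>\<in>F ` I. (\<Sum>y\<in>Cube. \<phi> y * cnj (\<psi> y)) = (if \<phi> = \<psi> then 1 else 0)"
    using orth inj by (auto simp: inj_on_eq_iff)
  moreover have "(\<forall>y. y \<notin> Cube \<longrightarrow> \<phi> y = 0) \<and> (\<exists>E. \<forall>y\<in>Cube. ham_restr lam V U Cube \<phi> y = E * \<phi> y)
                 \<and> m_localizing_fun \<tau> L m Cube \<phi>" if "\<phi> \<in> F ` I" for \<phi>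
  proof -
    obtain J f g where i: "(J, f, g) \<in> I" and \<phi>: "\<phi> = product_state J f g"
      using \<open>\<phi> \<in> F ` I\<close> by (auto simp: F_def)
    then have J: "J \<in> slot_sets" and f: "f \<in> B1" and g: "g \<in> B2" by (auto simp: I_def)
    obtain E1 E2 where "\<forall>a\<in>Cube1. ham_restr lam V U Cube1 f a = E1 * f a"
      "\<forall>b\<in>Cube2. ham_restr lam V U Cube2 g b = E2 * g b"
      using eigen1 eigen2 f g by blast
    then have "\<forall>y\<in>Cube. ham_restr lam V U Cube \<phi> y = (E1 + E2) * \<phi> y"
      using product_state_eigen[OF J] \<phi> by blast
    moreover obtain c1 c2 where c: "c1 \<in> Cube1" "localizing_at \<tau> L m Cube1 f c1"
      "c2 \<in> Cube2" "localizing_at \<tau> L m Cube2 g c2"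
      using loc_fun1 loc_fun2 f g unfolding m_localizing_fun_def by blast
    moreover have "sqrt (\<Sum>y\<in>Cube. (cmod (\<phi> y))\<^sup>2) = 1"
      using orth[OF i i] \<phi> by (intro unit_norm_if_inner_self_1) (simp add: F_def)
    then have "localizing_at \<tau> L m Cube \<phi> (interleave N J c1 c2)"
      unfolding localizing_at_def using product_state_localizing[OF J \<open>0 \<le> m\<close> c] \<phi> by auto
    then have "m_localizing_fun \<tau> L m Cube \<phi>"
      using interleave_in_Cube[OF c(1,3) J] unfolding m_localizing_fun_def by blast
    ultimately show ?thesis using \<phi> by (auto simp: product_state_def)
  qed
  ultimately show ?thesis
    unfolding m_localizing_cube_def Let_def Cube_def[symmetric] by blast
qed

end

section \<open>Measurability of the localization event\<close>

definition has_localizing_eigenbasis ::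
  "real \<Rightarrow> real \<Rightarrow> real \<Rightarrow> real \<Rightarrow> ('d::finite site \<Rightarrow> real) \<Rightarrow> ('d site \<Rightarrow> real)
     \<Rightarrow> 'd config set \<Rightarrow> bool" where
  "has_localizing_eigenbasis \<tau> L m lam U v \<Lambda> \<longleftrightarrow>
     (\<exists>B :: ('d config \<Rightarrow> complex) set.
        card B = card \<Lambda> \<and>
        (\<forall>\<phi>\<in>B. \<forall>\<psi>\<in>B. (\<Sum>y\<in>\<Lambda>. \<phi> y * cnj (\<psi> y)) = (if \<phi> = \<psi> then 1 else 0)) \<and>
        (\<forall>\<phi>\<in>B. (\<forall>y. y \<notin> \<Lambda> \<longrightarrow> \<phi> y = 0) \<and>
                 (\<exists>E. \<forall>y\<in>\<Lambda>. ham_restr lam v U \<Lambda> \<phi> y = E * \<phi> y) \<and>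
                 m_localizing_fun \<tau> L m \<Lambda> \<phi>))"

lemma m_localizing_cube_iff:
  "m_localizing_cube \<tau> m lam v U n L a \<longleftrightarrow> has_localizing_eigenbasis \<tau> L m lam U v (cube n L a)"
  by (simp add: m_localizing_cube_def has_localizing_eigenbasis_def Let_def)

(* A basis is encoded as the matrix b of its coordinates, row y being the basis vector indexed by
   y in Lambda.  The eigenvalue is written as the Rayleigh quotient, so that the condition is closed
   in the potential and the matrix jointly. *)

definition localizing_eigenmatrix ::
  "real \<Rightarrow> real \<Rightarrow> real \<Rightarrow> real \<Rightarrow> ('d::finite site \<Rightarrow> real) \<Rightarrow> ('d site \<Rightarrow> real)
     \<Rightarrow> 'd config set \<Rightarrow> ('d config \<times> 'd config \<Rightarrow> complex) \<Rightarrow> bool" where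
  "localizing_eigenmatrix \<tau> L m lam U v \<Lambda> b \<longleftrightarrow> (\<forall>y\<in>\<Lambda>.
     (\<forall>y'\<in>\<Lambda>. (\<Sum>z\<in>\<Lambda>. b (y, z) * cnj (b (y', z))) = (if y = y' then 1 else 0)) \<and>
     (\<forall>w\<in>\<Lambda>. ham_restr lam v U \<Lambda> (\<lambda>z. b (y, z)) w =
        (\<Sum>z\<in>\<Lambda>. ham_restr lam v U \<Lambda> (\<lambda>z. b (y, z)) z * cnj (b (y, z))) * b (y, w)) \<and>
     m_localizing_fun \<tau> L m \<Lambda> (\<lambda>z. b (y, z)))"

definition unit_matrices :: "'c set \<Rightarrow> ('c \<times> 'c \<Rightarrow> complex) set" where
  "unit_matrices \<Lambda> = PiE UNIV (\<lambda>q. if fst q \<in> \<Lambda> \<and> snd q \<in> \<Lambda> then cball 0 1 else {0})"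

lemma localizing_eigenmatrix_if_eigenbasis:
  fixes \<Lambda> :: "'d::finite config set"
  assumes fin: "finite \<Lambda>" and "has_localizing_eigenbasis \<tau> L m lam U v \<Lambda>"
  shows "\<exists>b\<in>unit_matrices \<Lambda>. localizing_eigenmatrix \<tau> L m lam U v \<Lambda> b"
proof -
  obtain B :: "('d config \<Rightarrow> complex) set" where card_B: "card B = card \<Lambda>"
    and orth: "\<forall>\<phi>\<in>B. \<forall>\<psi>\<in>B. (\<Sum>y\<in>\<Lambda>. \<phi> y * cnj (\<psi> y)) = (if \<phi> = \<psi> then 1 else 0)"
    and props: "\<forall>\<phi>\<in>B. (\<forall>y. y \<notin> \<Lambda> \<longrightarrow> \<phi> y = 0) \<and> (\<exists>E. \<forall>y\<in>\<Lambda>. ham_restr lam v U \<Lambda> \<phi> y = E * \<phi> y)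
                       \<and> m_localizing_fun \<tau> L m \<Lambda> \<phi>"
    using assms(2) unfolding has_localizing_eigenbasis_def by blast
  show ?thesis
  proof (cases "\<Lambda> = {}")
    case True
    then show ?thesis by (intro bexI[of _ "\<lambda>_. 0"]) (auto simp: localizing_eigenmatrix_def unit_matrices_def)
  next
    case False
    with fin card_B have "finite B" by (metis card_gt_0_iff)
  then obtain h where h: "bij_betw h \<Lambda> B" using finite_same_card_bij[OF fin] card_B by metis
  then have hB: "h y \<in> B" if "y \<in> \<Lambda>" for y using that bij_betwE by blast
  define b where "b q = (if fst q \<in> \<Lambda> \<and> snd q \<in> \<Lambda> then h (fst q) (snd q) else 0)" for q
  have row: "(\<lambda>z. b (y, z)) = h y" if "y \<in> \<Lambda>" for y
    using props hB[OF that] that by (auto simp: b_def)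
  have "b \<in> unit_matrices \<Lambda>"
  proof -
    have "cmod (h y z) \<le> 1" if yz: "y \<in> \<Lambda>" "z \<in> \<Lambda>" for y z
    proof -
      obtain c where "localizing_at \<tau> L m \<Lambda> (h y) c"
        using props hB[OF yz(1)] by (auto simp: m_localizing_fun_def)
      then show ?thesis using yz fin by (auto intro: cmod_le_1_if_unit_norm simp: localizing_at_def)
    qed
    then show ?thesis by (auto simp: unit_matrices_def b_def)
  qed
  moreover have "localizing_eigenmatrix \<tau> L m lam U v \<Lambda> b"
    unfolding localizing_eigenmatrix_def
  proof (rule ballI, intro conjI)
    fix y assume y: "y \<in> \<Lambda>"
    show "\<forall>y'\<in>\<Lambda>. (\<Sum>z\<in>\<Lambda>. b (y, z) * cnj (b (y', z))) = (if y = y' then 1 else 0)"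
    proof
      fix y' assume y': "y' \<in> \<Lambda>"
      have "h y = h y' \<longleftrightarrow> y = y'" using h y y' by (auto simp: bij_betw_def inj_on_def)
      then show "(\<Sum>z\<in>\<Lambda>. b (y, z) * cnj (b (y', z))) = (if y = y' then 1 else 0)"
        using orth hB[OF y] hB[OF y'] fun_cong[OF row[OF y]] fun_cong[OF row[OF y']] by simp
    qed
    obtain E where E: "\<forall>w\<in>\<Lambda>. ham_restr lam v U \<Lambda> (h y) w = E * h y w" using props hB[OF y] by blast
    have "(\<Sum>z\<in>\<Lambda>. ham_restr lam v U \<Lambda> (h y) z * cnj (h y z)) = E * (\<Sum>z\<in>\<Lambda>. h y z * cnj (h y z))"
      using E by (simp add: sum_distrib_left mult.assoc)
    also have "\<dots> = E" using orth hB[OF y] by simp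
    finally show "\<forall>w\<in>\<Lambda>. ham_restr lam v U \<Lambda> (\<lambda>z. b (y, z)) w =
                   (\<Sum>z\<in>\<Lambda>. ham_restr lam v U \<Lambda> (\<lambda>z. b (y, z)) z * cnj (b (y, z))) * b (y, w)"
      using E row[OF y] y by (simp add: b_def)
    show "m_localizing_fun \<tau> L m \<Lambda> (\<lambda>z. b (y, z))" using props hB[OF y] row[OF y] by simp
  qed
  ultimately show ?thesis by blast
  qed
qed

lemma eigenbasis_if_localizing_eigenmatrix:
  assumes "b \<in> unit_matrices \<Lambda>" and "localizing_eigenmatrix \<tau> L m lam U v \<Lambda> b"
  shows "has_localizing_eigenbasis \<tau> L m lam U v \<Lambda>"
proof -
  define F where "F y = (\<lambda>z. b (y, z))" for y
  have orth: "(\<Sum>z\<in>\<Lambda>. F y z * cnj (F y' z)) = (if y = y' then 1 else 0)" if "y \<in> \<Lambda>" "y' \<in> \<Lambda>" for y y'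
    using assms(2) that by (simp add: localizing_eigenmatrix_def F_def)
  then have inj: "inj_on F \<Lambda>" by (rule inj_on_if_orthonormal)
  have "card (F ` \<Lambda>) = card \<Lambda>" using card_image[OF inj] .
  moreover have "\<forall>\<phi>\<in>F ` \<Lambda>. \<forall>\<psi>\<in>F ` \<Lambda>. (\<Sum>y\<in>\<Lambda>. \<phi> y * cnj (\<psi> y)) = (if \<phi> = \<psi> then 1 else 0)"
    using orth inj by (auto simp: inj_on_eq_iff)
  moreover have "(\<forall>z. z \<notin> \<Lambda> \<longrightarrow> F y z = 0) \<and> (\<exists>E. \<forall>w\<in>\<Lambda>. ham_restr lam v U \<Lambda> (F y) w = E * F y w)
                 \<and> m_localizing_fun \<tau> L m \<Lambda> (F y)" if "y \<in> \<Lambda>" for y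
  proof -
    have "b (y, z) = 0" if "z \<notin> \<Lambda>" for z
      using assms(1) that unfolding unit_matrices_def by (auto dest!: PiE_mem[where x="(y, z)"])
    moreover have "\<exists>E. \<forall>w\<in>\<Lambda>. ham_restr lam v U \<Lambda> (F y) w = E * F y w"
      and "m_localizing_fun \<tau> L m \<Lambda> (F y)"
      using assms(2) that unfolding localizing_eigenmatrix_def F_def by blast+
    ultimately show ?thesis by (simp add: F_def)
  qed
  ultimately show ?thesis unfolding has_localizing_eigenbasis_def by blast
qed

lemma continuous_on_fst_apply [continuous_intros]: "continuous_on S (\<lambda>p. fst p q)"
  by (rule continuous_on_product_then_coordinatewise[where f=fst]) (rule continuous_on_fst[OF continuous_on_id])

lemma continuous_on_snd_apply [continuous_intros]: "continuous_on S (\<lambda>p. snd p q)"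
  by (rule continuous_on_product_then_coordinatewise[where f=snd]) (rule continuous_on_snd[OF continuous_on_id])

lemma closed_Collect_ball: "(\<And>y. y \<in> A \<Longrightarrow> closed {p. P y p}) \<Longrightarrow> closed {p. \<forall>y\<in>A. P y p}"
proof -
  assume "\<And>y. y \<in> A \<Longrightarrow> closed {p. P y p}"
  moreover have "{p. \<forall>y\<in>A. P y p} = (\<Inter>y\<in>A. {p. P y p})" by auto
  ultimately show ?thesis by auto
qed

lemma closed_Collect_bex_finite:
  "finite A \<Longrightarrow> (\<And>y. y \<in> A \<Longrightarrow> closed {p. P y p}) \<Longrightarrow> closed {p. \<exists>y\<in>A. P y p}"
proof -
  assume "finite A" "\<And>y. y \<in> A \<Longrightarrow> closed {p. P y p}"
  moreover have "{p. \<exists>y\<in>A. P y p} = (\<Union>y\<in>A. {p. P y p})" by auto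
  ultimately show ?thesis by auto
qed

lemma continuous_on_ham_restr:
  "continuous_on UNIV (\<lambda>p :: ('d::finite site \<Rightarrow> real) \<times> ('d config \<times> 'd config \<Rightarrow> complex).
     ham_restr lam (fst p) U \<Lambda> (\<lambda>z. snd p (y, z)) w)"
  unfolding ham_restr_def pot_def by (cases "w \<in> \<Lambda>") (simp_all only: if_True if_False; intro continuous_intros)+

lemma closed_localizing_eigenmatrix:
  fixes \<Lambda> :: "'d::finite config set"
  assumes "finite \<Lambda>"
  shows "closed {p :: ('d site \<Rightarrow> real) \<times> ('d config \<times> 'd config \<Rightarrow> complex).
                  localizing_eigenmatrix \<tau> L m lam U (fst p) \<Lambda> (snd p)}"
  unfolding localizing_eigenmatrix_def m_localizing_fun_def localizing_at_def
  by (intro closed_Collect_ball closed_Collect_conj closed_Collect_eq closed_Collect_le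
        closed_Collect_bex_finite[OF assms] closed_Collect_imp[OF open_Collect_const]
        continuous_intros continuous_on_ham_restr)

lemma compact_unit_matrices: "compact (unit_matrices \<Lambda>)"
proof -
  have "compactin (product_topology (\<lambda>_. euclidean) UNIV) (unit_matrices \<Lambda>)"
    unfolding unit_matrices_def compactin_PiE by auto
  then show ?thesis by (simp add: euclidean_product_topology)
qed

(* The projection of a closed set along the compact factor of coefficient matrices. *)

lemma closed_has_localizing_eigenbasis:
  fixes \<Lambda> :: "'d::finite config set"
  assumes fin: "finite \<Lambda>"
  shows "closed {v. has_localizing_eigenbasis \<tau> L m lam U v \<Lambda>}"
proof -
  define C where "C = {p :: ('d site \<Rightarrow> real) \<times> ('d config \<times> 'd config \<Rightarrow> complex).
                         snd p \<in> unit_matrices \<Lambda> \<and> localizing_eigenmatrix \<tau> L m lam U (fst p) \<Lambda> (snd p)}"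
  have projection: "{v. has_localizing_eigenbasis \<tau> L m lam U v \<Lambda>} = fst ` C"
  proof (intro set_eqI iffI)
    fix v assume "v \<in> {v. has_localizing_eigenbasis \<tau> L m lam U v \<Lambda>}"
    then obtain b where "(v, b) \<in> C"
      using localizing_eigenmatrix_if_eigenbasis[OF fin] unfolding C_def by fastforce
    then show "v \<in> fst ` C" by (metis fst_conv image_eqI)
  next
    fix v assume "v \<in> fst ` C"
    then show "v \<in> {v. has_localizing_eigenbasis \<tau> L m lam U v \<Lambda>}"
      using eigenbasis_if_localizing_eigenmatrix by (auto simp: C_def)
  qed
  have "C = {p. localizing_eigenmatrix \<tau> L m lam U (fst p) \<Lambda> (snd p)} \<inter> (topspace euclidean \<times> unit_matrices \<Lambda>)"
    by (auto simp: C_def)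
  then have "closedin (subtopology euclidean (topspace euclidean \<times> unit_matrices \<Lambda>)) C"
    using closed_localizing_eigenmatrix[OF fin] unfolding closedin_subtopology closed_closedin by blast
  then have "closedin (subtopology (prod_topology euclidean euclidean) (topspace euclidean \<times> unit_matrices \<Lambda>)) C"
    by (simp only: prod_topology_euclidean)
  then have "closedin (prod_topology euclidean (subtopology euclidean (unit_matrices \<Lambda>))) C"
    by (simp add: prod_topology_subtopology(2))
  moreover have "compact_space (subtopology euclidean (unit_matrices \<Lambda>))"
    by (rule compact_space_subtopology) (simp add: compact_unit_matrices)
  ultimately have "closedin euclidean (fst ` C)"
    using closed_map_fst unfolding closed_map_def by blast
  then show ?thesis unfolding projection closed_closedin .
qed

lemma sets_m_localizing_cube:
  fixes V :: "'w \<Rightarrow> 'd::finite site \<Rightarrow> real"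
  assumes "length a = n" and "V \<in> borel_measurable M"
  shows "{\<omega>\<in>space M. m_localizing_cube \<tau> m lam (V \<omega>) U n L a} \<in> sets M"
proof -
  have "{\<omega>\<in>space M. m_localizing_cube \<tau> m lam (V \<omega>) U n L a} =
        V -` {v. has_localizing_eigenbasis \<tau> L m lam U v (cube n L a)} \<inter> space M"
    by (auto simp: m_localizing_cube_iff)
  also have "\<dots> \<in> sets M"
    using assms by (intro measurable_sets[OF assms(2)] borel_closed closed_has_localizing_eigenbasis finite_cube)
  finally show ?thesis .
qed

section \<open>The probability bound\<close>

lemma (in prob_space) prob_Int_ge:
  assumes "A \<in> events" "B \<in> events"
  shows "prob A + prob B - 1 \<le> prob (A \<inter> B)"
  using measure_Un3[of A M B] prob_le_1[of "A \<union> B"] assms by (simp add: fmeasurable_eq_sets)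

lemma (in partially_interactive_cube) prob_m_localizing_ge:
  assumes "prob_space M" and V: "V \<in> borel_measurable M" and "0 \<le> m"
  shows "measure M {\<omega>\<in>space M. m_localizing_cube \<tau> m lam (V \<omega>) U N1 L x1}
         + measure M {\<omega>\<in>space M. m_localizing_cube \<tau> m lam (V \<omega>) U N2 L x2} - 1
         \<le> measure M {\<omega>\<in>space M. m_localizing_cube \<tau> m lam (V \<omega>) U N L x}"
proof -
  interpret prob_space M by fact
  let ?E = "\<lambda>n a. {\<omega>\<in>space M. m_localizing_cube \<tau> m lam (V \<omega>) U n L a}"
  have "prob (?E N1 x1) + prob (?E N2 x2) - 1 \<le> prob (?E N1 x1 \<inter> ?E N2 x2)"
    by (intro prob_Int_ge sets_m_localizing_cube V length_x1 length_x2)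
  also have "\<dots> \<le> prob (?E N x)"
    using m_localizing_cube_if_factors[OF \<open>0 \<le> m\<close>]
    by (intro finite_measure_mono sets_m_localizing_cube V length_x) auto
  finally show ?thesis .
qed

lemma le_measure_if_le_INF:
  assumes "c \<le> (INF a\<in>A. measure M (E a))" and "a \<in> A"
  shows "c \<le> measure M (E a)"
proof -
  have "bdd_below ((\<lambda>a. measure M (E a)) ` A)" by (rule bdd_belowI2[of _ 0]) simp
  then show ?thesis using assms by (meson cINF_lower order_trans)
qed

lemma powr_minus_diff_log2:
  assumes "1 < (L::real)"
  shows "L powr (- (q - ln 2 / ln L)) = 2 * L powr (- q)"
proof -
  have "L powr (- (q - ln 2 / ln L)) = L powr (ln 2 / ln L) * L powr (- q)"
    by (subst powr_add[symmetric]) simp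
  also have "L powr (ln 2 / ln L) = 2" using assms by (simp add: powr_def)
  finally show ?thesis .
qed

theorem proposition5p1:
  fixes M :: "'w measure"
    and \<V> :: "'w \<Rightarrow> 'd::finite site \<Rightarrow> real"
    and \<rho> :: "real \<Rightarrow> real"
    and v_max :: real
    and \<U> :: "'d site \<Rightarrow> real"
    and lam \<tau> L m :: real
    and N :: nat
    and p :: "nat \<Rightarrow> real"
    and x :: "'d config"
  assumes tau: "0 < \<tau>" "\<tau> < 1"
    and prob: "prob_space M"
    and indep: "prob_space.indep_vars M (\<lambda>_. borel) (\<lambda>u \<omega>. \<V> \<omega> u) UNIV"
    and distr: "\<And>u. distributed M lborel (\<lambda>\<omega>. \<V> \<omega> u) (\<lambda>t. ennreal (\<rho> t))"
    and vmax: "0 < v_max"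
    and rho_supp: "\<And>t. t \<notin> {0..v_max} \<Longrightarrow> \<rho> t = 0"
    and rho_bounds: "\<exists>c1 c2. 0 < c1 \<and> 0 < c2 \<and> (\<forall>t\<in>{0..v_max}. c1 \<le> \<rho> t \<and> \<rho> t \<le> c2)"
    and rho_C1: "\<exists>\<rho>'. (\<forall>t\<in>{0<..<v_max}. (\<rho> has_real_derivative \<rho>' t) (at t))
                     \<and> continuous_on {0<..<v_max} \<rho>' \<and> bounded (\<rho>' ` {0<..<v_max})"
    and U_fin: "finite {u. \<U> u \<noteq> 0}"
    and lam: "0 < lam"
    and N: "2 \<le> N"
    and p: "\<And>n. 1 \<le> n \<Longrightarrow> n \<le> N - 1 \<Longrightarrow> 1 \<le> p n"
    and L: "2 \<le> L"
    and m: "0 < m"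
    and hyp: "\<And>n. 1 \<le> n \<Longrightarrow> n \<le> N - 1 \<Longrightarrow>
        (INF x0\<in>{x0. length x0 = n}.
           measure M {\<omega>\<in>space M. m_localizing_cube \<tau> m lam (\<V> \<omega>) \<U> n L x0})
        \<ge> 1 - L powr (- p n)"
    and x: "length x = N"
    and PI: "partially_interactive \<U> N L x"
  shows "measure M {\<omega>\<in>space M. m_localizing_cube \<tau> m lam (\<V> \<omega>) \<U> N L x}
         \<ge> 1 - L powr (- ((MIN n\<in>{1..N-1}. p n) - ln 2 / ln L))"
proof -
  \<comment> \<open>Only the measurability of the potential enters.\<close>
  from PI obtain N1 N2 S1 S2 where N12: "1 \<le> N1" "1 \<le> N2" "N1 + N2 = N"
    and cube: "partially_interactive_cube \<U> N N1 N2 S1 S2 L x"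
    unfolding partially_interactive_def partially_interactive_cube_def using x L U_fin by auto
  interpret partially_interactive_cube \<U> N N1 N2 S1 S2 L x by (fact cube)
  have V: "\<V> \<in> borel_measurable M"
    by (rule measurable_coordinatewise_then_product) (use distributed_measurable[OF distr] in simp)
  define q where "q = (MIN n\<in>{1..N-1}. p n)"
  have factor_bound: "1 - L powr (- q) \<le> measure M {\<omega>\<in>space M. m_localizing_cube \<tau> m lam (\<V> \<omega>) \<U> n L a}"
    if "1 \<le> n" "n \<le> N - 1" "length a = n" for n a
  proof -
    have "L powr (- p n) \<le> L powr (- q)"
      using that L by (intro powr_mono) (auto simp: q_def)
    moreover have "1 - L powr (- p n) \<le> measure M {\<omega>\<in>space M. m_localizing_cube \<tau> m lam (\<V> \<omega>) \<U> n L a}"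
      using le_measure_if_le_INF[OF hyp[OF that(1,2)]] that(3) by simp
    ultimately show ?thesis by linarith
  qed
  have "1 - 2 * L powr (- q) \<le> measure M {\<omega>\<in>space M. m_localizing_cube \<tau> m lam (\<V> \<omega>) \<U> N L x}"
    using factor_bound[of N1 x1] factor_bound[of N2 x2] N12 length_x1 length_x2
      prob_m_localizing_ge[OF prob V, of m \<tau> lam] m
    by linarith
  then show ?thesis unfolding q_def[symmetric] using L by (subst powr_minus_diff_log2) auto
qed

end
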